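(* Let $\mathcal L,\mathcal L'\in\mathfrak o$ and $\beta\in{}_{\mathcal L'}\underline W_{\mathcal L}$. (1) If $\gamma\in{}_{\mathcal L''}\underline W_{\mathcal L'}$, left multiplication by $w^\gamma$ is an isomorphism of posets $(\beta,\le_\beta)\xrightarrow{\sim}(\gamma\beta,\le_{\gamma\beta})$. (2) If $\delta\in{}_{\mathcal L}\underline W_{\mathcal L''}$, right multiplication by $w^\delta$ is an isomorphism of posets $(\beta,\le_\beta)\xrightarrow{\sim}(\beta\delta,\le_{\beta\delta})$. (3) For $w,w'\in\beta$, if $w'\le_\beta w$ then $w'\le w$ in the Bruhat order of $W$.
   Context: $G$ is a connected split reductive group over a finite field, $B\supset T$ a Borel subgroup and split maximal torus, $\Phi^+$ the positive roots, $W=N_G(T)/T$ with simple reflections determined by $B$ and Bruhat order $\le$. $\mathrm{Ch}(T)$: rank-one character sheaves on $T$, with $W$-action $w\mathcal L=(w^{-1})^*\mathcal L$; $\mathfrak o$ a $W$-orbit, $\mathcal L,\mathcal L',\mathcal L''\in\mathfrak o$. $W^\circ_{\mathcal L}$ is the subgroup generated by reflections $r_\alpha$ for roots $\alpha$ with $(\alpha^\vee)^*\mathcal L$ trivial on $\mathbb G_m$; it is a Coxeter group with simple reflections given by the simple roots of $\Phi_{\mathcal L}\cap\Phi^+$, with its own Bruhat order $\le_{W^\circ_{\mathcal L}}$. ${}_{\mathcal L'}W_{\mathcal L}=\{w:w\mathcal L=\mathcal L'\}$; blocks are elements of ${}_{\mathcal L'}\underline W_{\mathcal L}={}_{\mathcal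 L'}W_{\mathcal L}/W^\circ_{\mathcal L}$, with product $\gamma\beta=\{w_1w_2:w_1\in\gamma,w_2\in\beta\}$. Each block $\beta$ has a unique Bruhat-minimal element $w^\beta$ and every element of $\beta$ is uniquely $w^\beta x$, $x\in W^\circ_{\mathcal L}$. The partial order $\le_\beta$ on $\beta$: $w^\beta x'\le_\beta w^\beta x$ iff $x'\le_{W^\circ_{\mathcal L}}x$. *)

theory Defs
  imports Complex_Main "HOL-Computational_Algebra.Primes"
begin

text \<open>Lattices X^*(T), X_*(T) of a split torus of rank CARD('n), both modelled as 'n => int.
 Elements of W = N(T)/T are modelled by their (faithful) action on the cocharacter lattice.\<close>

type_synonym 'n lat = "'n \<Rightarrow> int"
type_synonym 'n wel = "'n lat \<Rightarrow> 'n lat"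

definition pair :: "'n::finite lat \<Rightarrow> 'n lat \<Rightarrow> int" where
  "pair l x = (\<Sum>i\<in>UNIV. l i * x i)"

definition refl_ch :: "'n::finite lat \<Rightarrow> 'n lat \<Rightarrow> 'n lat \<Rightarrow> 'n lat" where
  "refl_ch a ac l = (\<lambda>i. l i - pair l ac * a i)"

definition refl_coch :: "'n::finite lat \<Rightarrow> 'n lat \<Rightarrow> 'n lat \<Rightarrow> 'n lat" where
  "refl_coch a ac x = (\<lambda>i. x i - pair a x * ac i)"

text \<open>Root datum (Springer 7.4.1): roots Phi in X^*, coroot bijection cor onto Phi^vee in X_*.\<close>
definition root_datum :: "'n::finite lat set \<Rightarrow> ('n lat \<Rightarrow> 'n lat) \<Rightarrow> bool" where
  "root_datum Phi cor \<longleftrightarrow> finite Phi \<and> inj_on cor Phi \<and>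
     (\<forall>a\<in>Phi. pair a (cor a) = 2 \<and> refl_ch a (cor a) ` Phi \<subseteq> Phi
               \<and> refl_coch a (cor a) ` (cor ` Phi) \<subseteq> cor ` Phi)"

definition reduced_rd :: "'n::finite lat set \<Rightarrow> bool" where
  "reduced_rd Phi \<longleftrightarrow> (\<forall>a\<in>Phi. (\<lambda>i. 2 * a i) \<notin> Phi)"

text \<open>Positive system (= Borel subgroup containing T): roots positive for a regular real functional.\<close>
definition positive_system :: "'n::finite lat set \<Rightarrow> 'n lat set \<Rightarrow> bool" where
  "positive_system Phi P \<longleftrightarrow> (\<exists>f::'n \<Rightarrow> real.
      (\<forall>a\<in>Phi. (\<Sum>i\<in>UNIV. f i * of_int (a i)) \<noteq> 0) \<and>
      P = {a\<in>Phi. (\<Sum>i\<in>UNIV. f i * of_int (a i)) > 0})"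

definition simple_roots :: "'n lat set \<Rightarrow> 'n lat set" where
  "simple_roots P = {a\<in>P. \<not> (\<exists>b\<in>P. \<exists>c\<in>P. a = (\<lambda>i. b i + c i))}"

definition rrefl :: "('n::finite lat \<Rightarrow> 'n lat) \<Rightarrow> 'n lat \<Rightarrow> 'n wel" where
  "rrefl cor a = refl_coch a (cor a)"

text \<open>Subgroup generated by a set of involutions (finite group: generated monoid).\<close>
inductive_set gen :: "'n wel set \<Rightarrow> 'n wel set" for S where
  gen_id: "id \<in> gen S"
| gen_step: "s \<in> S \<Longrightarrow> w \<in> gen S \<Longrightarrow> s \<circ> w \<in> gen S"

definition clen :: "'n wel set \<Rightarrow> 'n wel \<Rightarrow> nat" where
  "clen S w = (LEAST k. \<exists>ws. length ws = k \<and> set ws \<subseteq> S \<and> foldr (\<circ>) ws id = w)"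

definition crefls :: "'n wel set \<Rightarrow> 'n wel set \<Rightarrow> 'n wel set" where
  "crefls S G = {g \<circ> s \<circ> g' | g s g'. g \<in> G \<and> g' \<in> G \<and> g' \<circ> g = id \<and> s \<in> S}"

definition bruhat :: "'n wel set \<Rightarrow> 'n wel set \<Rightarrow> 'n wel \<Rightarrow> 'n wel \<Rightarrow> bool" where
  "bruhat S G u w \<longleftrightarrow> u \<in> G \<and> w \<in> G \<and>
     (\<lambda>a b. \<exists>t\<in>crefls S G. b = a \<circ> t \<and> clen S a < clen S b)\<^sup>*\<^sup>* u w"

definition Wgrp :: "'n::finite lat set \<Rightarrow> ('n lat \<Rightarrow> 'n lat) \<Rightarrow> 'n wel set" where
  "Wgrp Phi cor = gen {rrefl cor a | a. a \<in> Phi}"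

definition Wsimple :: "('n::finite lat \<Rightarrow> 'n lat) \<Rightarrow> 'n lat set \<Rightarrow> 'n wel set" where
  "Wsimple cor P = {rrefl cor a | a. a \<in> simple_roots P}"

text \<open>Rank-one (tame) character sheaves on T_{F_q-bar}, p = char F_q: homomorphisms
  X_*(T) -> mu_{p'} (roots of unity of order prime to p), coefficients identified with C.\<close>
definition tame_char :: "nat \<Rightarrow> ('n lat \<Rightarrow> complex) \<Rightarrow> bool" where
  "tame_char p L \<longleftrightarrow> (\<forall>x y. L (\<lambda>i. x i + y i) = L x * L y) \<and>
      (\<forall>x. \<exists>m::nat. m > 0 \<and> coprime m p \<and> L x ^ m = 1)"

definition act :: "'n wel \<Rightarrow> ('n lat \<Rightarrow> complex) \<Rightarrow> ('n lat \<Rightarrow> complex)" where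
  "act w L = L \<circ> inv w"

definition PhiL :: "'n::finite lat set \<Rightarrow> ('n lat \<Rightarrow> 'n lat) \<Rightarrow> ('n lat \<Rightarrow> complex) \<Rightarrow> 'n lat set" where
  "PhiL Phi cor L = {a\<in>Phi. L (cor a) = 1}"

definition Wo :: "'n::finite lat set \<Rightarrow> ('n lat \<Rightarrow> 'n lat) \<Rightarrow> ('n lat \<Rightarrow> complex) \<Rightarrow> 'n wel set" where
  "Wo Phi cor L = gen {rrefl cor a | a. a \<in> PhiL Phi cor L}"

definition SL :: "'n::finite lat set \<Rightarrow> ('n lat \<Rightarrow> 'n lat) \<Rightarrow> 'n lat set \<Rightarrow> ('n lat \<Rightarrow> complex) \<Rightarrow> 'n wel set" where
  "SL Phi cor P L = {rrefl cor a | a. a \<in> simple_roots (PhiL Phi cor L \<inter> P)}"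

text \<open>Blocks: {}_{L'}W_L / W^o_L.\<close>
definition blocks :: "'n::finite lat set \<Rightarrow> ('n lat \<Rightarrow> 'n lat) \<Rightarrow> ('n lat \<Rightarrow> complex) \<Rightarrow> ('n lat \<Rightarrow> complex) \<Rightarrow> 'n wel set set" where
  "blocks Phi cor L' L = {(\<lambda>x. w \<circ> x) ` Wo Phi cor L | w. w \<in> Wgrp Phi cor \<and> act w L = L'}"

definition bprod :: "'n wel set \<Rightarrow> 'n wel set \<Rightarrow> 'n wel set" where
  "bprod g b = {w1 \<circ> w2 | w1 w2. w1 \<in> g \<and> w2 \<in> b}"

definition wmin :: "'n::finite lat set \<Rightarrow> ('n lat \<Rightarrow> 'n lat) \<Rightarrow> 'n lat set \<Rightarrow> 'n wel set \<Rightarrow> 'n wel" where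
  "wmin Phi cor P b = (THE u. u \<in> b \<and> (\<forall>w\<in>b. bruhat (Wsimple cor P) (Wgrp Phi cor) u w))"

definition le_blk :: "'n::finite lat set \<Rightarrow> ('n lat \<Rightarrow> 'n lat) \<Rightarrow> 'n lat set \<Rightarrow> ('n lat \<Rightarrow> complex)
     \<Rightarrow> 'n wel set \<Rightarrow> 'n wel \<Rightarrow> 'n wel \<Rightarrow> bool" where
  "le_blk Phi cor P L b u w \<longleftrightarrow> (\<exists>x' x. x' \<in> Wo Phi cor L \<and> x \<in> Wo Phi cor L \<and>
      u = wmin Phi cor P b \<circ> x' \<and> w = wmin Phi cor P b \<circ> x \<and>
      bruhat (SL Phi cor P L) (Wo Phi cor L) x' x)"

end

theory Submission
  imports Defs
begin

text \<open>
  Write a block as beta = u W_L^o. Its Bruhat-minimal element is the unique u in the coset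
  that maps the positive roots of Phi_L to positive roots. Indeed, if u has this property
  and t is a reflection of W_L^o with x < x t there, then x maps the root of t into Phi_L^+
  and u x maps it into Phi^+, so u x < u x t in W. Bruhat chains of W_L^o therefore lift
  to W, which gives (3) and shows that u = w^beta.

  For (1), w^gamma w^beta again maps Phi_L^+ into Phi^+, so it is the minimal element of
  gamma beta, and w^gamma (w^beta x) = (w^gamma w^beta) x. For (2), w^delta maps Phi_L''^+
  onto Phi_L^+, hence simple roots onto simple roots, so conjugation by w^delta is an
  isomorphism of Coxeter systems between W_L^o and W_L''^o, which preserves the Bruhat
  orders.

  The root-system facts behind this (a simple reflection permutes the other positive
  roots, the reflections of a closed subsystem are generated by its simple reflections,
  and len(w s_alpha) < len(w) iff w alpha is negative) are derived from the axioms of a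
  reduced root datum, simple roots being the indecomposable positive roots.
\<close>

section \<open>The pairing and reflections\<close>

lemma pair_diff_mult_left[simp]: "pair (\<lambda>i. l i - k * m i) x = pair l x - k * pair m x"
  by (simp add: pair_def algebra_simps sum_subtractf sum_distrib_left)
lemma pair_add_mult_left[simp]: "pair (\<lambda>i. l i + k * m i) x = pair l x + k * pair m x"
  by (simp add: pair_def algebra_simps sum.distrib sum_distrib_left)
lemma pair_add_left[simp]: "pair (\<lambda>i. l i + m i) x = pair l x + pair m x"
  by (simp add: pair_def algebra_simps sum.distrib)
lemma pair_diff_left[simp]: "pair (\<lambda>i. l i - m i) x = pair l x - pair m x"
  by (simp add: pair_def algebra_simps sum_subtractf)
lemma pair_minus_left[simp]: "pair (\<lambda>i. - l i) x = - pair l x"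
  by (simp add: pair_def sum_negf)
lemma pair_mult_left[simp]: "pair (\<lambda>i. k * l i) x = k * pair l x"
  by (simp add: pair_def algebra_simps sum_distrib_left)
lemma pair_diff_mult_right[simp]: "pair l (\<lambda>i. x i - k * y i) = pair l x - k * pair l y"
  by (simp add: pair_def algebra_simps sum_subtractf sum_distrib_left)
lemma pair_add_mult_right[simp]: "pair l (\<lambda>i. x i + k * y i) = pair l x + k * pair l y"
  by (simp add: pair_def algebra_simps sum.distrib sum_distrib_left)
lemma pair_add_right[simp]: "pair l (\<lambda>i. x i + y i) = pair l x + pair l y"
  by (simp add: pair_def algebra_simps sum.distrib)
lemma pair_diff_right[simp]: "pair l (\<lambda>i. x i - y i) = pair l x - pair l y"
  by (simp add: pair_def algebra_simps sum_subtractf)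
lemma pair_minus_right[simp]: "pair l (\<lambda>i. - x i) = - pair l x"
  by (simp add: pair_def sum_negf)
lemma pair_mult_right[simp]: "pair l (\<lambda>i. k * x i) = k * pair l x"
  by (simp add: pair_def algebra_simps sum_distrib_left)

lemma pair_ext:
  fixes l m :: "'n::finite lat"
  assumes "\<And>x. pair l x = pair m x" shows "l = m"
proof
  fix i
  have "pair l (\<lambda>j. if j = i then 1 else 0) = l i" for l :: "'n lat"
    by (simp add: pair_def if_distrib cong: if_cong)
  then show "l i = m i" using assms by metis
qed

lemma pair_refl_ch: "pair (refl_ch a c l) x = pair l (refl_coch a c x)"
  by (simp add: refl_ch_def refl_coch_def)

lemma refl_ch_invol: "pair a c = 2 \<Longrightarrow> refl_ch a c (refl_ch a c l) = l"
  by (simp add: refl_ch_def fun_eq_iff)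
lemma refl_coch_invol: "pair a c = 2 \<Longrightarrow> refl_coch a c (refl_coch a c x) = x"
  by (simp add: refl_coch_def fun_eq_iff)
lemma refl_ch_self: "pair a c = 2 \<Longrightarrow> refl_ch a c a = (\<lambda>i. - a i)"
  by (simp add: refl_ch_def fun_eq_iff algebra_simps)
lemma refl_coch_self: "pair a c = 2 \<Longrightarrow> refl_coch a c c = (\<lambda>i. - c i)"
  by (simp add: refl_coch_def fun_eq_iff algebra_simps)

section \<open>Generated groups, length and Bruhat order\<close>

lemma gen_base: "s \<in> S \<Longrightarrow> s \<in> gen S"
  using gen.gen_step[OF _ gen.gen_id, of s S] comp_id by metis

lemma gen_comp: "u \<in> gen S \<Longrightarrow> v \<in> gen S \<Longrightarrow> u \<circ> v \<in> gen S"
proof (induction u rule: gen.induct)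
  case gen_id then show ?case by (metis id_comp)
next
  case (gen_step s w) then show ?case using gen.gen_step[of s S "w \<circ> v"] by (metis comp_assoc)
qed

lemma gen_mono: assumes "S \<subseteq> T" shows "gen S \<subseteq> gen T"
proof
  fix u assume "u \<in> gen S" then show "u \<in> gen T"
  proof (induction u rule: gen.induct)
    case gen_id show ?case by (rule gen.gen_id)
  next
    case (gen_step s w) then show ?case using assms by (blast intro: gen.gen_step)
  qed
qed

lemma gen_inv:
  assumes inv: "\<And>t. t \<in> S \<Longrightarrow> t \<circ> t = id"
  shows "u \<in> gen S \<Longrightarrow> \<exists>u'\<in>gen S. u' \<circ> u = id \<and> u \<circ> u' = id"
proof (induction u rule: gen.induct)
  case gen_id then show ?case using gen.gen_id[of S] by (metis comp_id)
next
  case (gen_step s w)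
  then obtain w' where w': "w' \<in> gen S" "w' \<circ> w = id" "w \<circ> w' = id" by blast
  have "w' \<circ> s \<in> gen S" using gen_comp[OF w'(1) gen_base[OF gen_step(1)]] .
  moreover have "(w' \<circ> s) \<circ> (s \<circ> w) = id"
    using inv[OF gen_step(1)] w'(2) by (metis comp_assoc comp_id)
  moreover have "(s \<circ> w) \<circ> (w' \<circ> s) = id"
    using inv[OF gen_step(1)] w'(3) by (metis comp_assoc comp_id)
  ultimately show ?case by blast
qed

lemma gen_coset_eq:
  assumes inv: "\<And>t. t \<in> S \<Longrightarrow> t \<circ> t = id" and x0: "x0 \<in> gen S"
  shows "(\<lambda>x. (c \<circ> x0) \<circ> x) ` gen S = (\<lambda>x. c \<circ> x) ` gen S"
proof
  show "(\<lambda>x. (c \<circ> x0) \<circ> x) ` gen S \<subseteq> (\<lambda>x. c \<circ> x) ` gen S"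
    using gen_comp[OF x0] by (auto simp: comp_assoc)
  obtain x0' where x0': "x0' \<in> gen S" "x0 \<circ> x0' = id" using gen_inv[OF inv x0] by blast
  have "c \<circ> x = (c \<circ> x0) \<circ> (x0' \<circ> x)" for x
    using x0'(2) by (metis comp_assoc id_comp)
  then show "(\<lambda>x. c \<circ> x) ` gen S \<subseteq> (\<lambda>x. (c \<circ> x0) \<circ> x) ` gen S"
    using gen_comp[OF x0'(1)] by blast
qed

lemma gen_foldr: "set ws \<subseteq> S \<Longrightarrow> foldr (\<circ>) ws id \<in> gen S"
  by (induction ws) (auto intro: gen.intros)

lemma foldr_cons_comp: "foldr (\<circ>) (s # ws) id = s \<circ> foldr (\<circ>) ws id" by simp

lemma gen_word_exists: "u \<in> gen S \<Longrightarrow> \<exists>ws. set ws \<subseteq> S \<and> foldr (\<circ>) ws id = u"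
proof (induction u rule: gen.induct)
  case gen_id then show ?case by (intro exI[of _ "[]"]) auto
next
  case (gen_step s w)
  then obtain ws where ws: "set ws \<subseteq> S" "foldr (\<circ>) ws id = w" by blast
  have "set (s # ws) \<subseteq> S" using ws gen_step(1) by simp
  moreover have "foldr (\<circ>) (s # ws) id = s \<circ> w" using foldr_cons_comp ws(2) by metis
  ultimately show ?case by blast
qed

lemma clen_le_length: "set ws \<subseteq> S \<Longrightarrow> foldr (\<circ>) ws id = w \<Longrightarrow> clen S w \<le> length ws"
  unfolding clen_def by (rule Least_le) auto

lemma reduced_word_exists: "w \<in> gen S \<Longrightarrow> \<exists>ws. set ws \<subseteq> S \<and> foldr (\<circ>) ws id = w \<and> length ws = clen S w"
proof -
  assume "w \<in> gen S"
  then obtain ws where ws: "set ws \<subseteq> S" "foldr (\<circ>) ws id = w" using gen_word_exists by blast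
  have "\<exists>ws'. length ws' = clen S w \<and> set ws' \<subseteq> S \<and> foldr (\<circ>) ws' id = w"
    unfolding clen_def by (rule LeastI[of _ "length ws"]) (use ws in blast)
  then show ?thesis by auto
qed

lemma gen_conj:
  assumes vv: "v \<circ> v' = id" "v' \<circ> v = id"
    and S: "\<And>t. t \<in> S1 \<Longrightarrow> v' \<circ> t \<circ> v \<in> gen S2"
  shows "g \<in> gen S1 \<Longrightarrow> v' \<circ> g \<circ> v \<in> gen S2"
proof (induction g rule: gen.induct)
  case gen_id then show ?case using vv(2) gen.gen_id by (metis comp_id)
next
  case (gen_step s w)
  have "v' \<circ> (s \<circ> w) \<circ> v = (v' \<circ> s \<circ> v) \<circ> (v' \<circ> w \<circ> v)"
    using vv(1) by (metis comp_assoc comp_id)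
  then show ?case using gen_comp[OF S[OF gen_step(1)] gen_step(3)] by metis
qed

lemma foldr_snoc_comp: "foldr (\<circ>) (ws @ [t]) id = foldr (\<circ>) ws id \<circ> t"
  by (induction ws) (auto simp: fun_eq_iff)

definition bruhat_step :: "'n wel set \<Rightarrow> 'n wel set \<Rightarrow> 'n wel \<Rightarrow> 'n wel \<Rightarrow> bool" where
  "bruhat_step S G = (\<lambda>a b. \<exists>t\<in>crefls S G. b = a \<circ> t \<and> clen S a < clen S b)"

lemma bruhat_iff_steps: "bruhat S G u w \<longleftrightarrow> u \<in> G \<and> w \<in> G \<and> (bruhat_step S G)\<^sup>*\<^sup>* u w"
  unfolding bruhat_def bruhat_step_def by simp

lemma bruhat_step_iff: "bruhat_step S G a b \<longleftrightarrow> (\<exists>t\<in>crefls S G. b = a \<circ> t \<and> clen S a < clen S b)"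
  unfolding bruhat_step_def by simp

lemma bruhat_clen_less: "bruhat S G u w \<Longrightarrow> u = w \<or> clen S u < clen S w"
proof -
  assume "bruhat S G u w"
  then have "(\<lambda>a b. \<exists>t\<in>crefls S G. b = a \<circ> t \<and> clen S a < clen S b)\<^sup>*\<^sup>* u w"
    by (simp add: bruhat_def)
  then show ?thesis
    by (induction rule: rtranclp_induct) auto
qed

lemma bruhat_antisym: "bruhat S G u w \<Longrightarrow> bruhat S G w u \<Longrightarrow> u = w"
  by (metis bruhat_clen_less less_asym)

lemma bruhat_id_le:
  assumes "x \<in> gen S" shows "bruhat S (gen S) id x"
  using assms
proof (induction "clen S x" arbitrary: x rule: less_induct)
  case less
  obtain ws where ws: "set ws \<subseteq> S" "foldr (\<circ>) ws id = x" "length ws = clen S x"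
    using reduced_word_exists[OF less.prems] by blast
  show ?case
  proof (cases ws rule: rev_cases)
    case Nil
    then show ?thesis using ws gen.gen_id unfolding bruhat_def by auto
  next
    case (snoc ws1 t)
    define x1 where "x1 = foldr (\<circ>) ws1 id"
    have x: "x = x1 \<circ> t" using ws(2) snoc foldr_snoc_comp x1_def by metis
    have ws1: "set ws1 \<subseteq> S" "t \<in> S" using ws(1) snoc by auto
    have x1: "x1 \<in> gen S" using gen_foldr[OF ws1(1)] x1_def by simp
    have "clen S x1 \<le> length ws1" using clen_le_length[OF ws1(1)] x1_def by simp
    then have less: "clen S x1 < clen S x" using ws(3) snoc by simp
    have "t \<in> crefls S (gen S)"
      unfolding crefls_def
      by (rule CollectI, intro exI[of _ id] exI[of _ t]) (simp add: ws1(2) gen.gen_id)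
    then have "bruhat_step S (gen S) x1 x" unfolding bruhat_step_iff using x less by blast
    moreover have "(bruhat_step S (gen S))\<^sup>*\<^sup>* id x1" using less.hyps[OF less x1] unfolding bruhat_iff_steps by blast
    ultimately show ?thesis unfolding bruhat_iff_steps using gen.gen_id less.prems by auto
  qed
qed

lemma crefls_gen: "t \<in> crefls S (gen S) \<Longrightarrow> t \<in> gen S"
  unfolding crefls_def by (auto intro: gen_comp gen_base)

locale conjugation =
  fixes v v' :: "'n wel" and S1 S2 :: "'n wel set"
  assumes right_inverse: "v \<circ> v' = id" and left_inverse: "v' \<circ> v = id"
    and image_generators: "(\<lambda>t. v' \<circ> t \<circ> v) ` S1 = S2"
begin

lemma conj_comp: "v' \<circ> (a \<circ> b) \<circ> v = (v' \<circ> a \<circ> v) \<circ> (v' \<circ> b \<circ> v)"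
  using right_inverse by (metis comp_assoc comp_id)

lemma conj_cancel: "v \<circ> (v' \<circ> a \<circ> v) \<circ> v' = a"
  using right_inverse by (metis comp_assoc comp_id id_comp)

lemma inverse: "conjugation v' v S2 S1"
proof
  show "v' \<circ> v = id" by (fact left_inverse)
  show "v \<circ> v' = id" by (fact right_inverse)
  show "(\<lambda>t. v \<circ> t \<circ> v') ` S2 = S1"
    unfolding image_generators[symmetric] image_image conj_cancel by simp
qed

lemma conj_gen: "g \<in> gen S1 \<Longrightarrow> v' \<circ> g \<circ> v \<in> gen S2"
  by (rule gen_conj[OF right_inverse left_inverse]) (use image_generators in \<open>auto intro: gen_base\<close>)

lemma foldr_conj: "foldr (\<circ>) (map (\<lambda>t. v' \<circ> t \<circ> v) ws) id = v' \<circ> foldr (\<circ>) ws id \<circ> v"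
proof (induction ws)
  case (Cons t ws)
  then show ?case using conj_comp[of t "foldr (\<circ>) ws id"] by (simp only: list.map foldr_cons_comp)
qed (simp add: left_inverse)

lemma clen_conj_le:
  assumes g: "g \<in> gen S1" shows "clen S2 (v' \<circ> g \<circ> v) \<le> clen S1 g"
proof -
  obtain ws where ws: "set ws \<subseteq> S1" "foldr (\<circ>) ws id = g" "length ws = clen S1 g"
    using reduced_word_exists[OF g] by blast
  have "set (map (\<lambda>t. v' \<circ> t \<circ> v) ws) \<subseteq> S2" using ws(1) image_generators by auto
  moreover have "foldr (\<circ>) (map (\<lambda>t. v' \<circ> t \<circ> v) ws) id = v' \<circ> g \<circ> v"
    using foldr_conj ws(2) by simp
  ultimately have "clen S2 (v' \<circ> g \<circ> v) \<le> length (map (\<lambda>t. v' \<circ> t \<circ> v) ws)"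
    by (rule clen_le_length)
  then show ?thesis using ws(3) by simp
qed

lemma clen_conj: "g \<in> gen S1 \<Longrightarrow> clen S2 (v' \<circ> g \<circ> v) = clen S1 g"
  using clen_conj_le conjugation.clen_conj_le[OF inverse conj_gen] conj_cancel
  by (metis le_antisym)

lemma crefls_conj:
  assumes "t \<in> crefls S1 (gen S1)" shows "v' \<circ> t \<circ> v \<in> crefls S2 (gen S2)"
proof -
  obtain g s g' where t: "t = g \<circ> s \<circ> g'" "g \<in> gen S1" "g' \<in> gen S1" "g' \<circ> g = id" "s \<in> S1"
    using assms unfolding crefls_def by blast
  have "v' \<circ> t \<circ> v = (v' \<circ> g \<circ> v) \<circ> (v' \<circ> s \<circ> v) \<circ> (v' \<circ> g' \<circ> v)"
    unfolding t(1) conj_comp ..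
  moreover have "(v' \<circ> g' \<circ> v) \<circ> (v' \<circ> g \<circ> v) = id"
    using t(4) left_inverse by (metis conj_comp comp_id)
  moreover have "v' \<circ> s \<circ> v \<in> S2" using image_generators t(5) by blast
  ultimately show ?thesis unfolding crefls_def using conj_gen t(2,3) by blast
qed

lemma bruhat_step_conj:
  assumes y: "y \<in> gen S1" and yz: "bruhat_step S1 (gen S1) y z"
  shows "bruhat_step S2 (gen S2) (v' \<circ> y \<circ> v) (v' \<circ> z \<circ> v)" and "z \<in> gen S1"
proof -
  obtain t where t: "t \<in> crefls S1 (gen S1)" "z = y \<circ> t" "clen S1 y < clen S1 z"
    using yz unfolding bruhat_step_iff by blast
  show z: "z \<in> gen S1" using gen_comp[OF y crefls_gen[OF t(1)]] t(2) by simp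
  have "v' \<circ> z \<circ> v = (v' \<circ> y \<circ> v) \<circ> (v' \<circ> t \<circ> v)" unfolding t(2) conj_comp ..
  moreover have "clen S2 (v' \<circ> y \<circ> v) < clen S2 (v' \<circ> z \<circ> v)" using clen_conj y z t(3) by simp
  ultimately show "bruhat_step S2 (gen S2) (v' \<circ> y \<circ> v) (v' \<circ> z \<circ> v)"
    unfolding bruhat_step_iff using crefls_conj[OF t(1)] by blast
qed

lemma bruhat_conj:
  assumes "bruhat S1 (gen S1) a b"
  shows "bruhat S2 (gen S2) (v' \<circ> a \<circ> v) (v' \<circ> b \<circ> v)"
proof -
  have a: "a \<in> gen S1" and chain: "(bruhat_step S1 (gen S1))\<^sup>*\<^sup>* a b"
    using assms unfolding bruhat_iff_steps by auto
  have "(bruhat_step S2 (gen S2))\<^sup>*\<^sup>* (v' \<circ> a \<circ> v) (v' \<circ> z \<circ> v) \<and> z \<in> gen S1"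
    if "(bruhat_step S1 (gen S1))\<^sup>*\<^sup>* a z" for z
    using that
  proof (induction rule: rtranclp_induct)
    case (step y z)
    then show ?case using bruhat_step_conj by (meson rtranclp.rtrancl_into_rtrancl)
  qed (simp add: a)
  then show ?thesis unfolding bruhat_iff_steps using chain a conj_gen by blast
qed

lemma bruhat_conj_iff:
  "bruhat S1 (gen S1) a b \<longleftrightarrow> bruhat S2 (gen S2) (v' \<circ> a \<circ> v) (v' \<circ> b \<circ> v)"
  using bruhat_conj conjugation.bruhat_conj[OF inverse] conj_cancel by metis

end

section \<open>Characters\<close>

definition multiplicative :: "('n lat \<Rightarrow> 'a::monoid_mult) \<Rightarrow> bool" where
  "multiplicative L \<longleftrightarrow> (\<forall>x y. L (\<lambda>i. x i + y i) = L x * L y)"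

lemma tame_char_multiplicative: "tame_char p L \<Longrightarrow> multiplicative L"
  by (simp add: tame_char_def multiplicative_def)

lemma multiplicativeD: "multiplicative L \<Longrightarrow> L (\<lambda>i. x i + y i) = L x * L y"
  by (simp add: multiplicative_def)

lemma multiplicative_shift_nat:
  assumes L: "multiplicative L" and c: "L c = 1"
  shows "L (\<lambda>i. x i + int n * c i) = L x"
proof (induction n)
  case (Suc n)
  have "L (\<lambda>i. x i + int (Suc n) * c i) = L (\<lambda>i. (x i + int n * c i) + c i)"
    by (rule arg_cong[where f = L]) (simp add: algebra_simps)
  also have "\<dots> = L x" using multiplicativeD[OF L] Suc.IH c by simp
  finally show ?case .
qed simp

lemma multiplicative_shift:
  assumes L: "multiplicative L" and c: "L c = 1"
  shows "L (\<lambda>i. x i - k * c i) = L x"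
proof (cases "k \<le> 0")
  case True
  have "L (\<lambda>i. x i - k * c i) = L (\<lambda>i. x i + int (nat (- k)) * c i)"
    by (rule arg_cong[where f = L]) (use True in simp)
  also have "\<dots> = L x" using multiplicative_shift_nat[OF L, OF c, where x = x and n = "nat (- k)"] .
  finally show ?thesis .
next
  case False
  have "L x = L (\<lambda>i. (x i - k * c i) + int (nat k) * c i)"
    by (rule arg_cong[where f = L]) (use False in simp)
  also have "\<dots> = L (\<lambda>i. x i - k * c i)"
    using multiplicative_shift_nat[OF L, OF c, where x = "\<lambda>i. x i - k * c i" and n = "nat k"] by simp
  finally show ?thesis by (rule sym)
qed

section \<open>Root data\<close>

locale based_root_datum =
  fixes Phi :: "'n::finite lat set" and cor :: "'n lat \<Rightarrow> 'n lat"
    and P :: "'n lat set" and f :: "'n \<Rightarrow> real"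
  assumes rdatum: "root_datum Phi cor" and reduced: "reduced_rd Phi"
    and f_nonzero: "\<And>a. a \<in> Phi \<Longrightarrow> (\<Sum>i\<in>UNIV. f i * of_int (a i)) \<noteq> 0"
    and P_eq: "P = {a\<in>Phi. (\<Sum>i\<in>UNIV. f i * of_int (a i)) > 0}"
begin

definition F :: "'n lat \<Rightarrow> real" where "F a = (\<Sum>i\<in>UNIV. f i * of_int (a i))"

lemma F_diff_mult[simp]: "F (\<lambda>i. l i - k * m i) = F l - of_int k * F m"
  by (simp add: F_def algebra_simps sum_subtractf sum_distrib_left)
lemma F_add[simp]: "F (\<lambda>i. l i + m i) = F l + F m"
  by (simp add: F_def algebra_simps sum.distrib)
lemma F_minus[simp]: "F (\<lambda>i. - l i) = - F l"
  by (simp add: F_def sum_negf)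
lemma F_diff[simp]: "F (\<lambda>i. l i - m i) = F l - F m"
  by (simp add: F_def algebra_simps sum_subtractf)

lemma pos_iff: "a \<in> P \<longleftrightarrow> a \<in> Phi \<and> F a > 0"
  using P_eq by (auto simp: F_def)
lemma F_root_nonzero: "a \<in> Phi \<Longrightarrow> F a \<noteq> 0" using f_nonzero by (simp add: F_def)
lemma pos_subset: "P \<subseteq> Phi" using pos_iff by auto

lemma finite_roots: "finite Phi" using rdatum by (simp add: root_datum_def)
lemma inj_on_cor: "inj_on cor Phi" using rdatum by (simp add: root_datum_def)

definition F_rank :: "'n lat \<Rightarrow> nat" where "F_rank a = card {b\<in>Phi. F b < F a}"

lemma F_rank_less: "b \<in> Phi \<Longrightarrow> F b < F a \<Longrightarrow> F_rank b < F_rank a"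
  unfolding F_rank_def by (rule psubset_card_mono) (use finite_roots in auto)

lemma pair_cor: "a \<in> Phi \<Longrightarrow> pair a (cor a) = 2" using rdatum by (simp add: root_datum_def)
lemma refl_ch_root: "a \<in> Phi \<Longrightarrow> b \<in> Phi \<Longrightarrow> refl_ch a (cor a) b \<in> Phi"
  using rdatum by (auto simp: root_datum_def)
lemma refl_coch_coroot: "a \<in> Phi \<Longrightarrow> b \<in> Phi \<Longrightarrow> \<exists>c\<in>Phi. refl_coch a (cor a) (cor b) = cor c"
  using rdatum unfolding root_datum_def by (metis (no_types, lifting) image_iff image_subset_iff)
lemma minus_root: "a \<in> Phi \<Longrightarrow> (\<lambda>i. - a i) \<in> Phi"
  using refl_ch_root[of a a] pair_cor[of a] refl_ch_self[of a "cor a"] by simp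
lemma double_not_root: "a \<in> Phi \<Longrightarrow> (\<lambda>i. 2 * a i) \<notin> Phi"
  using reduced by (simp add: reduced_rd_def)

lemma minus_pos_iff: "a \<in> Phi \<Longrightarrow> (\<lambda>i. - a i) \<in> P \<longleftrightarrow> a \<notin> P"
  using F_root_nonzero[of a] minus_root[of a] by (auto simp: pos_iff)

lemma root_progression_trivial:
  assumes "\<And>n::nat. (\<lambda>i. a i + int n * v i) \<in> Phi"
  shows "v = (\<lambda>i. 0)"
proof (rule ccontr)
  assume "v \<noteq> (\<lambda>i. 0)"
  then obtain i where "v i \<noteq> 0" by auto
  then have "inj (\<lambda>n::nat. (\<lambda>i. a i + int n * v i))"
    by (auto intro!: injI dest!: fun_cong[where x = i])
  then show False
    using assms finite_roots infinite_iff_countable_subset[of Phi] by blast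
qed

\<comment> \<open>The composite of the two reflections moves a along the string a + n (2a - 2d) of roots.\<close>
lemma reflections_same_coroot_eq:
  assumes a: "a \<in> Phi" and pa: "pair a c = 2" and pd: "pair d c = 2"
    and sa: "\<And>l. l \<in> Phi \<Longrightarrow> (\<lambda>i. l i - pair l c * a i) \<in> Phi"
    and sd: "\<And>l. l \<in> Phi \<Longrightarrow> (\<lambda>i. l i - pair l c * d i) \<in> Phi"
  shows "a = d"
proof -
  define e where "e = (\<lambda>i. 2 * a i - 2 * d i)"
  have "(\<lambda>i. a i + int n * e i) \<in> Phi" for n
  proof (induction n)
    case (Suc n)
    define x where "x = (\<lambda>i. a i + int n * e i)"
    have "pair e c = 0" using pa pd by (simp add: e_def)
    then have px: "pair x c = 2" using pa by (simp add: x_def)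
    have y: "(\<lambda>i. x i - 2 * d i) \<in> Phi" using sd[of x] Suc px by (simp add: x_def)
    have py: "pair (\<lambda>i. x i - 2 * d i) c = -2" using px pd by simp
    have "(\<lambda>i. (x i - 2 * d i) - pair (\<lambda>i. x i - 2 * d i) c * a i)
        = (\<lambda>i. a i + int (Suc n) * e i)"
      unfolding py by (simp add: x_def e_def algebra_simps)
    then show ?case using sa[OF y] by simp
  qed (simp add: a)
  then have "e = (\<lambda>i. 0)" by (rule root_progression_trivial)
  then show "a = d" by (simp add: e_def fun_eq_iff)
qed

lemma cor_refl_ch:
  assumes a: "a \<in> Phi" and b: "b \<in> Phi"
  shows "cor (refl_ch b (cor b) a) = refl_coch b (cor b) (cor a)"
proof -
  obtain d where d: "d \<in> Phi" "refl_coch b (cor b) (cor a) = cor d"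
    using refl_coch_coroot[OF b a] by auto
  have "refl_ch b (cor b) a = d"
  proof (rule reflections_same_coroot_eq[where c = "refl_coch b (cor b) (cor a)"])
    show "refl_ch b (cor b) a \<in> Phi" using refl_ch_root[OF b a] .
    show "pair (refl_ch b (cor b) a) (refl_coch b (cor b) (cor a)) = 2"
      by (simp add: pair_refl_ch refl_coch_invol pair_cor a b)
    show "pair d (refl_coch b (cor b) (cor a)) = 2" using d pair_cor by simp
    show "(\<lambda>i. l i - pair l (refl_coch b (cor b) (cor a)) * d i) \<in> Phi" if "l \<in> Phi" for l
      using refl_ch_root[OF d(1) that] d(2) by (simp add: refl_ch_def)
    fix l assume l: "l \<in> Phi"
    \<comment> \<open>This is the reflection s_b s_a s_b.\<close>
    have "(\<lambda>i. l i - pair l (refl_coch b (cor b) (cor a)) * refl_ch b (cor b) a i)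
        = refl_ch b (cor b) (refl_ch a (cor a) (refl_ch b (cor b) l))"
      using pair_cor[OF b] unfolding refl_ch_def refl_coch_def
      by (simp add: fun_eq_iff) (simp add: algebra_simps)
    then show "(\<lambda>i. l i - pair l (refl_coch b (cor b) (cor a)) * refl_ch b (cor b) a i) \<in> Phi"
      using refl_ch_root a b l by simp
  qed
  then show ?thesis using d by simp
qed

\<comment> \<open>W-invariant; through Cauchy-Schwarz it bounds the products of Cartan integers.\<close>
definition B :: "'n lat \<Rightarrow> 'n lat \<Rightarrow> int" where
  "B l m = (\<Sum>a\<in>Phi. pair l (cor a) * pair m (cor a))"

lemma B_commute: "B l m = B m l" by (simp add: B_def mult.commute)
lemma B_diff_mult_left[simp]: "B (\<lambda>i. l i - k * m i) x = B l x - k * B m x"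
  by (simp add: B_def algebra_simps sum_subtractf sum_distrib_left)
lemma B_add_right[simp]: "B x (\<lambda>i. l i + m i) = B x l + B x m"
  by (simp add: B_def algebra_simps sum.distrib)
lemma B_minus_right[simp]: "B x (\<lambda>i. - l i) = - B x l"
  by (simp add: B_def sum_negf)
lemma B_lincomb_left[simp]: "B (\<lambda>i. p * l i - q * m i) x = p * B l x - q * B m x"
  by (simp add: B_def algebra_simps sum_subtractf sum_distrib_left)
lemma B_lincomb_right[simp]: "B x (\<lambda>i. p * l i - q * m i) = p * B x l - q * B x m"
  by (simp add: B_def algebra_simps sum_subtractf sum_distrib_left)

lemma inj_on_refl_ch: "b \<in> Phi \<Longrightarrow> inj_on (refl_ch b (cor b)) Phi"
  by (metis inj_onI refl_ch_invol pair_cor)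
lemma refl_ch_image: "b \<in> Phi \<Longrightarrow> refl_ch b (cor b) ` Phi = Phi"
proof
  assume b: "b \<in> Phi"
  show "refl_ch b (cor b) ` Phi \<subseteq> Phi" using refl_ch_root b by auto
  show "Phi \<subseteq> refl_ch b (cor b) ` Phi"
  proof
    fix x assume "x \<in> Phi"
    then show "x \<in> refl_ch b (cor b) ` Phi"
      using refl_ch_root[OF b, of x] refl_ch_invol[OF pair_cor[OF b]] by (metis image_eqI)
  qed
qed

lemma B_refl_ch_invariant:
  assumes b: "b \<in> Phi"
  shows "B (refl_ch b (cor b) l) (refl_ch b (cor b) m) = B l m"
proof -
  let ?g = "\<lambda>a. pair l (cor a) * pair m (cor a)"
  have "B (refl_ch b (cor b) l) (refl_ch b (cor b) m) = (\<Sum>a\<in>Phi. ?g (refl_ch b (cor b) a))"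
    unfolding B_def pair_refl_ch by (intro sum.cong refl) (simp add: cor_refl_ch b)
  also have "\<dots> = sum ?g (refl_ch b (cor b) ` Phi)"
    by (rule sum.reindex[symmetric, unfolded comp_def]) (rule inj_on_refl_ch[OF b])
  also have "\<dots> = B l m" unfolding refl_ch_image[OF b] B_def ..
  finally show ?thesis .
qed

lemma B_cartan: assumes b: "b \<in> Phi" shows "2 * B l b = pair l (cor b) * B b b"
proof -
  have "B (refl_ch b (cor b) l) (\<lambda>i. - b i) = B l b"
    using B_refl_ch_invariant[OF b, of l b] refl_ch_self[OF pair_cor[OF b]] by simp
  then have "B (\<lambda>i. l i - pair l (cor b) * b i) (\<lambda>i. - b i) = B l b"
    by (simp add: refl_ch_def)
  then have "- (B l b - pair l (cor b) * B b b) = B l b"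
    by (simp only: B_diff_mult_left B_minus_right)
  then show ?thesis by linarith
qed

lemma B_root_ge_4: assumes b: "b \<in> Phi" shows "4 \<le> B b b"
proof -
  have "pair b (cor b) * pair b (cor b) \<le> B b b"
    unfolding B_def by (rule member_le_sum) (use b finite_roots in auto)
  then show ?thesis using pair_cor[OF b] by simp
qed

lemma B_nonneg: "0 \<le> B l l" unfolding B_def by (intro sum_nonneg) auto

lemma B_Cauchy_Schwarz: assumes "B y y > 0" shows "B x y * B x y \<le> B x x * B y y"
proof -
  have "0 \<le> B (\<lambda>i. B y y * x i - B x y * y i) (\<lambda>i. B y y * x i - B x y * y i)"
    by (rule B_nonneg)
  also have "\<dots> = B y y * (B x x * B y y - B x y * B x y)"
    by (simp only: B_lincomb_left B_lincomb_right) (simp add: algebra_simps B_commute[of y x])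
  finally show ?thesis using assms by (simp add: zero_le_mult_iff)
qed

lemma no_multiple_root:
  assumes a: "a \<in> Phi" and j: "j \<ge> 2" and ja: "(\<lambda>i. j * a i) \<in> Phi"
  shows False
proof -
  have "2 = pair (\<lambda>i. j * a i) (cor (\<lambda>i. j * a i))" using pair_cor[OF ja] by simp
  also have "\<dots> = j * pair a (cor (\<lambda>i. j * a i))" by simp
  finally have e: "j * pair a (cor (\<lambda>i. j * a i)) = 2" by simp
  define x where "x = pair a (cor (\<lambda>i. j * a i))"
  have e': "j * x = 2" using e x_def by simp
  have "0 < j * x" using e' by simp
  then have "x > 0" using j by (simp add: zero_less_mult_iff)
  have "x = 1"
  proof (rule ccontr)
    assume "x \<noteq> 1" then have "x \<ge> 2" using \<open>x > 0\<close> by simp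
    then have "j * x \<ge> 2 * 2" using j by (intro mult_mono) auto
    then show False using e' by simp
  qed
  then have "j = 2" using e' by simp
  then show False using double_not_root[OF a] ja by simp
qed

\<comment> \<open>s_a s_g moves a along the string a + n (2a - p g) of roots.\<close>
lemma cartan_product_4_proportional:
  assumes a: "a \<in> Phi" and g: "g \<in> Phi" and pq: "pair a (cor g) * pair g (cor a) = 4"
  shows "(\<lambda>i. 2 * a i) = (\<lambda>i. pair a (cor g) * g i)"
proof -
  define p where "p = pair a (cor g)"
  define v where "v = (\<lambda>i. 2 * a i - p * g i)"
  have pv: "pair v (cor g) = 0" unfolding v_def p_def using pair_cor[OF g] by simp
  have pva: "pair v (cor a) = 0" unfolding v_def p_def using pair_cor[OF a] pq by simp
  have "(\<lambda>i. a i + int n * v i) \<in> Phi" for n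
  proof (induction n)
    case (Suc n)
    define x where "x = (\<lambda>i. a i + int n * v i)"
    have px: "pair x (cor g) = p" unfolding x_def using pv p_def by simp
    have pxa: "pair x (cor a) = 2" unfolding x_def using pva pair_cor[OF a] by simp
    define y where "y = (\<lambda>i. x i - p * g i)"
    have yP: "y \<in> Phi" using refl_ch_root[OF g, of x] Suc px unfolding x_def y_def refl_ch_def
      by simp
    have py: "pair y (cor a) = -2" unfolding y_def using pxa pq p_def by simp
    have "refl_ch a (cor a) y = (\<lambda>i. a i + int (Suc n) * v i)"
      unfolding refl_ch_def py unfolding y_def x_def v_def by (rule ext) (simp add: algebra_simps)
    then show ?case using refl_ch_root[OF a yP] by simp
  qed (simp add: a)
  then have "v = (\<lambda>i. 0)" by (rule root_progression_trivial)
  then show ?thesis by (simp add: v_def p_def fun_eq_iff)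
qed

lemma cartan_product_4_eq:
  assumes a: "a \<in> Phi" and g: "g \<in> Phi"
    and pq: "pair a (cor g) * pair g (cor a) = 4" and p0: "pair a (cor g) > 0"
  shows "g = a"
proof -
  define p where "p = pair a (cor g)"
  define q where "q = pair g (cor a)"
  have pq': "p * q = 4" using pq p_def q_def by simp
  have twice_a: "2 * a i = p * g i" for i
    using fun_cong[OF cartan_product_4_proportional[OF a g pq], of i] p_def by simp
  have "q > 0" using pq' p0 p_def by (smt (verit) zero_less_mult_iff)
  then have "p \<le> 4" using pq' by (smt (verit) mult_le_cancel_left1)
  moreover have "p \<noteq> 3"
  proof
    assume "p = 3" with pq' have "3 * q = 4" by simp
    then show False by presburger
  qed
  ultimately have "p = 1 \<or> p = 2 \<or> p = 4" using p0 p_def by auto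
  moreover have "p \<noteq> 1"
  proof
    assume "p = 1" then have "g = (\<lambda>i. 2 * a i)" using twice_a by (simp add: fun_eq_iff)
    then show False using double_not_root[OF a] g by simp
  qed
  moreover have "p \<noteq> 4"
  proof
    assume "p = 4" then have "a = (\<lambda>i. 2 * g i)" using twice_a by (simp add: fun_eq_iff)
    then show False using double_not_root[OF g] a by simp
  qed
  ultimately have "p = 2" by blast
  then show "g = a" using twice_a by (simp add: fun_eq_iff)
qed

lemma cartan_entry_one:
  assumes a: "a \<in> Phi" and g: "g \<in> Phi" and ne: "g \<noteq> a" and q0: "pair g (cor a) > 0"
  shows "pair g (cor a) = 1 \<or> pair a (cor g) = 1"
proof -
  define p where "p = pair a (cor g)"
  define q where "q = pair g (cor a)"
  have Ba: "B a a \<ge> 4" and Bg: "B g g \<ge> 4" using B_root_ge_4 a g by auto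
  have f1: "2 * B g a = q * B a a" using B_cartan[OF a] q_def by simp
  have f2: "2 * B a g = p * B g g" using B_cartan[OF g] p_def by simp
  have "q * B a a > 0" using q0 q_def Ba by simp
  then have "B g a > 0" using f1 by linarith
  then have "p * B g g > 0" using f2 B_commute[of a g] by linarith
  then have "p > 0" using Bg by (simp add: zero_less_mult_iff)
  have "(2 * B a g) * (2 * B g a) = (p * B g g) * (q * B a a)" using f1 f2 by simp
  then have "4 * (B a g * B a g) = (p * q) * (B a a * B g g)"
    using B_commute[of a g] by (simp add: algebra_simps)
  moreover have "B a g * B a g \<le> B a a * B g g" using B_Cauchy_Schwarz Bg by simp
  ultimately have "(p * q) * (B a a * B g g) \<le> 4 * (B a a * B g g)" by simp
  moreover have "B a a * B g g > 0" using Ba Bg by simp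
  ultimately have "p * q \<le> 4" by (meson mult_right_le_imp_le)
  moreover have "p * q \<noteq> 4" using cartan_product_4_eq[OF a g] ne \<open>p > 0\<close> p_def q_def by auto
  ultimately have pq3: "p * q \<le> 3" by simp
  have "p = 1 \<or> q = 1"
  proof (rule ccontr)
    assume "\<not> (p = 1 \<or> q = 1)"
    then have "p \<ge> 2" "q \<ge> 2" using \<open>p > 0\<close> q0 q_def by auto
    then have "p * q \<ge> 2 * 2" by (intro mult_mono) auto
    then show False using pq3 by simp
  qed
  then show ?thesis using p_def q_def by auto
qed

abbreviation Refls :: "'n wel set" where "Refls \<equiv> {rrefl cor a | a. a \<in> Phi}"

lemma rrefl_apply: "rrefl cor a x = (\<lambda>i. x i - pair a x * cor a i)"
  by (simp add: rrefl_def refl_coch_def)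

lemma rrefl_invol: "a \<in> Phi \<Longrightarrow> rrefl cor a \<circ> rrefl cor a = id"
  by (simp add: fun_eq_iff rrefl_def refl_coch_invol pair_cor)

lemma cor_minus: "a \<in> Phi \<Longrightarrow> cor (\<lambda>i. - a i) = (\<lambda>i. - cor a i)"
  using cor_refl_ch[of a a] refl_ch_self[OF pair_cor] refl_coch_self[OF pair_cor] by simp

lemma rrefl_minus: "a \<in> Phi \<Longrightarrow> rrefl cor (\<lambda>i. - a i) = rrefl cor a"
  by (simp add: fun_eq_iff rrefl_apply cor_minus)

lemma rrefl_in_W: "a \<in> Phi \<Longrightarrow> rrefl cor a \<in> gen Refls" by (rule gen_base) auto

lemma W_linear: "w \<in> gen Refls \<Longrightarrow> w (\<lambda>i. x i + k * y i) = (\<lambda>i. w x i + k * w y i)"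
proof (induction w arbitrary: x y k rule: gen.induct)
  case gen_id then show ?case by simp
next
  case (gen_step s w)
  then obtain a where s: "s = rrefl cor a" by auto
  show ?case unfolding s comp_def gen_step(3)
    by (simp add: rrefl_apply fun_eq_iff algebra_simps)
qed

lemma W_linear_diff: "w \<in> gen Refls \<Longrightarrow> w (\<lambda>i. x i - k * y i) = (\<lambda>i. w x i - k * w y i)"
  using W_linear[of w x "- k" y] by simp

lemma W_inv: "w \<in> gen Refls \<Longrightarrow> \<exists>w'\<in>gen Refls. w' \<circ> w = id \<and> w \<circ> w' = id"
  by (rule gen_inv) (auto simp: rrefl_invol)

lemma W_root_action_exists: "w \<in> gen Refls \<Longrightarrow> a \<in> Phi \<Longrightarrow> \<exists>b\<in>Phi. cor b = w (cor a) \<and> (\<forall>x. pair b (w x) = pair a x)"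
proof (induction w arbitrary: a rule: gen.induct)
  case gen_id then show ?case by auto
next
  case (gen_step s w)
  then obtain c where s: "s = rrefl cor c" and c: "c \<in> Phi" by auto
  obtain b where b: "b \<in> Phi" "cor b = w (cor a)" "\<forall>x. pair b (w x) = pair a x"
    using gen_step by blast
  have "refl_ch c (cor c) b \<in> Phi" using refl_ch_root[OF c b(1)] .
  moreover have "cor (refl_ch c (cor c) b) = (s \<circ> w) (cor a)"
    using cor_refl_ch[OF b(1) c] b(2) s by (simp add: rrefl_def)
  moreover have "\<forall>x. pair (refl_ch c (cor c) b) ((s \<circ> w) x) = pair a x"
    using b(3) s by (simp add: pair_refl_ch rrefl_def refl_coch_invol pair_cor[OF c])
  ultimately show ?case by blast
qed

definition act_root :: "'n wel \<Rightarrow> 'n lat \<Rightarrow> 'n lat" where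
  "act_root w a = (THE b. b \<in> Phi \<and> cor b = w (cor a))"

lemma act_root_unique: "b \<in> Phi \<Longrightarrow> cor b = w (cor a) \<Longrightarrow> act_root w a = b"
  unfolding act_root_def by (rule the_equality) (use inj_on_cor in \<open>auto simp: inj_on_def\<close>)

lemma act_root_props:
  assumes "w \<in> gen Refls" "a \<in> Phi"
  shows "act_root w a \<in> Phi" "cor (act_root w a) = w (cor a)" "\<And>x. pair (act_root w a) (w x) = pair a x"
proof -
  obtain b where b: "b \<in> Phi" "cor b = w (cor a)" "\<forall>x. pair b (w x) = pair a x"
    using W_root_action_exists[OF assms] by blast
  have "act_root w a = b" by (rule act_root_unique[of b w a, OF b(1,2)])
  then show "act_root w a \<in> Phi" "cor (act_root w a) = w (cor a)" "\<And>x. pair (act_root w a) (w x) = pair a x"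
    using b by auto
qed

lemma act_root_rrefl: "a \<in> Phi \<Longrightarrow> b \<in> Phi \<Longrightarrow> act_root (rrefl cor b) a = refl_ch b (cor b) a"
  by (rule act_root_unique) (auto simp: refl_ch_root cor_refl_ch rrefl_def)

lemma act_root_comp: "v \<in> gen Refls \<Longrightarrow> w \<in> gen Refls \<Longrightarrow> a \<in> Phi \<Longrightarrow> act_root (v \<circ> w) a = act_root v (act_root w a)"
  by (rule act_root_unique) (auto simp: act_root_props)

lemma act_root_id: "a \<in> Phi \<Longrightarrow> act_root id a = a"
  by (rule act_root_unique) auto

lemma W_pair_ext: "w \<in> gen Refls \<Longrightarrow> (\<And>x. pair l (w x) = pair m (w x)) \<Longrightarrow> l = m"
proof -
  assume w: "w \<in> gen Refls" and h: "\<And>x. pair l (w x) = pair m (w x)"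
  obtain w' where "w \<circ> w' = id" using W_inv[OF w] by blast
  then have "w (w' y) = y" for y by (metis comp_apply id_apply)
  then show "l = m" using h by (metis pair_ext)
qed

lemma act_root_minus: "w \<in> gen Refls \<Longrightarrow> a \<in> Phi \<Longrightarrow> act_root w (\<lambda>i. - a i) = (\<lambda>i. - act_root w a i)"
  by (rule W_pair_ext[of w]) (auto simp: act_root_props minus_root)

lemma comp_rrefl: "w \<in> gen Refls \<Longrightarrow> a \<in> Phi \<Longrightarrow> w \<circ> rrefl cor a = rrefl cor (act_root w a) \<circ> w"
  by (auto simp: fun_eq_iff rrefl_apply W_linear_diff act_root_props)

lemma W_cancel_left: "w \<in> gen Refls \<Longrightarrow> w \<circ> u = w \<circ> v \<Longrightarrow> u = v"
proof -
  assume w: "w \<in> gen Refls" and e: "w \<circ> u = w \<circ> v"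
  obtain w' where "w' \<circ> w = id" using W_inv[OF w] by blast
  then show "u = v" using e by (metis comp_assoc id_comp)
qed

lemma W_cancel_right: "w \<in> gen Refls \<Longrightarrow> u \<circ> w = v \<circ> w \<Longrightarrow> u = v"
proof -
  assume w: "w \<in> gen Refls" and e: "u \<circ> w = v \<circ> w"
  obtain w' where "w \<circ> w' = id" using W_inv[OF w] by blast
  then show "u = v" using e by (metis comp_assoc comp_id)
qed

lemma act_root_add_iff:
  assumes w: "w \<in> gen Refls" and abc: "a \<in> Phi" "b \<in> Phi" "c \<in> Phi"
  shows "act_root w a = (\<lambda>i. act_root w b i + act_root w c i) \<longleftrightarrow> a = (\<lambda>i. b i + c i)"
proof
  assume "act_root w a = (\<lambda>i. act_root w b i + act_root w c i)"
  then have "pair a x = pair (\<lambda>i. b i + c i) x" for x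
    using act_root_props(3)[OF w] abc by (metis pair_add_left)
  then show "a = (\<lambda>i. b i + c i)" by (rule pair_ext)
next
  assume a: "a = (\<lambda>i. b i + c i)"
  with abc(1) have bc: "(\<lambda>i. b i + c i) \<in> Phi" by simp
  have "pair (act_root w (\<lambda>i. b i + c i)) (w x)
      = pair (\<lambda>i. act_root w b i + act_root w c i) (w x)" for x
    using act_root_props(3)[OF w] bc abc(2,3) by simp
  then show "act_root w a = (\<lambda>i. act_root w b i + act_root w c i)"
    unfolding a by (rule W_pair_ext[OF w])
qed

lemma act_root_simple_roots_image:
  assumes w: "w \<in> gen Refls" and Q: "Q \<subseteq> Phi"
  shows "act_root w ` simple_roots Q = simple_roots (act_root w ` Q)"
proof -
  have add: "act_root w a = (\<lambda>i. act_root w b i + act_root w c i) \<longleftrightarrow> a = (\<lambda>i. b i + c i)"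
    if "a \<in> Q" "b \<in> Q" "c \<in> Q" for a b c
    using act_root_add_iff[OF w] Q that by blast
  show ?thesis
    unfolding simple_roots_def by (auto simp: add)
qed

lemma conj_rrefl_image:
  assumes w: "w \<in> gen Refls" and w': "w' \<circ> w = id" and D: "D \<subseteq> Phi"
  shows "(\<lambda>t. w' \<circ> t \<circ> w) ` {rrefl cor b | b. b \<in> act_root w ` D} = {rrefl cor a | a. a \<in> D}"
proof -
  have conj: "w' \<circ> rrefl cor (act_root w a) \<circ> w = rrefl cor a" if "a \<in> Phi" for a
    using comp_rrefl[OF w that] w' by (metis comp_assoc id_comp)
  show ?thesis
  proof
    show "(\<lambda>t. w' \<circ> t \<circ> w) ` {rrefl cor b | b. b \<in> act_root w ` D} \<subseteq> {rrefl cor a | a. a \<in> D}"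
      using conj D by blast
    show "{rrefl cor a | a. a \<in> D} \<subseteq> (\<lambda>t. w' \<circ> t \<circ> w) ` {rrefl cor b | b. b \<in> act_root w ` D}"
    proof
      fix t assume "t \<in> {rrefl cor a | a. a \<in> D}"
      then obtain a where "a \<in> D" "t = rrefl cor a" by blast
      then show "t \<in> (\<lambda>t. w' \<circ> t \<circ> w) ` {rrefl cor b | b. b \<in> act_root w ` D}"
        using conj[of a] D by (intro image_eqI[of _ _ "rrefl cor (act_root w a)"]) auto
    qed
  qed
qed

end

section \<open>Closed subsystems\<close>

locale closed_subsystem = based_root_datum +
  fixes Psi
  assumes Psi_subset: "Psi \<subseteq> Phi"
    and Psi_refl_closed: "\<And>a b. a \<in> Psi \<Longrightarrow> b \<in> Psi \<Longrightarrow> refl_ch a (cor a) b \<in> Psi"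
begin

lemma Psi_root: "a \<in> Psi \<Longrightarrow> a \<in> Phi" using Psi_subset by auto

lemma Psi_minus: "a \<in> Psi \<Longrightarrow> (\<lambda>i. - a i) \<in> Psi"
  using Psi_refl_closed[of a a] refl_ch_self[OF pair_cor[OF Psi_root]] by simp

lemma Psi_diff:
  assumes a: "a \<in> Psi" and g: "g \<in> Psi" and ne: "g \<noteq> a" and q0: "pair g (cor a) > 0"
  shows "(\<lambda>i. g i - a i) \<in> Psi"
proof -
  from cartan_entry_one[OF Psi_root[OF a] Psi_root[OF g] ne q0]
  show ?thesis
  proof
    assume "pair g (cor a) = 1"
    then show ?thesis using Psi_refl_closed[OF a g] by (simp add: refl_ch_def)
  next
    assume "pair a (cor g) = 1"
    then have "(\<lambda>i. a i - g i) \<in> Psi" using Psi_refl_closed[OF g a] by (simp add: refl_ch_def)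
    from Psi_minus[OF this] show ?thesis by simp
  qed
qed

definition Delta where "Delta = simple_roots (Psi \<inter> P)"

lemma Delta_iff: "a \<in> Delta \<longleftrightarrow> a \<in> Psi \<inter> P \<and> \<not> (\<exists>b\<in>Psi \<inter> P. \<exists>c\<in>Psi \<inter> P. a = (\<lambda>i. b i + c i))"
  by (simp add: Delta_def simple_roots_def)

lemma Delta_root: "a \<in> Delta \<Longrightarrow> a \<in> Psi \<and> a \<in> P \<and> a \<in> Phi" using Delta_iff Psi_root by auto

lemma pos_diff_simple:
  assumes al: "al \<in> Delta" and x: "x \<in> Psi \<inter> P" "x \<noteq> al" and pos: "pair x (cor al) > 0"
  shows "(\<lambda>i. x i - al i) \<in> Psi \<inter> P" and "(\<lambda>i. x i - al i) \<noteq> al"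
proof -
  have alP: "al \<in> Psi" "al \<in> Phi" using Delta_root[OF al] by auto
  have xa: "(\<lambda>i. x i - al i) \<in> Psi" using Psi_diff[OF alP(1) _ x(2) pos] x(1) by blast
  have "(\<lambda>i. x i - al i) \<in> P"
  proof (rule ccontr)
    assume "(\<lambda>i. x i - al i) \<notin> P"
    then have "(\<lambda>i. - (x i - al i)) \<in> Psi \<inter> P"
      using minus_pos_iff[OF Psi_root[OF xa]] Psi_minus[OF xa] by simp
    then have "\<exists>b\<in>Psi \<inter> P. \<exists>c\<in>Psi \<inter> P. al = (\<lambda>i. b i + c i)"
      using x(1) by (intro bexI[where x = x] bexI[where x = "\<lambda>i. - (x i - al i)"]) auto
    then show False using al Delta_iff by simp
  qed
  then show "(\<lambda>i. x i - al i) \<in> Psi \<inter> P" using xa by blast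
  show "(\<lambda>i. x i - al i) \<noteq> al"
  proof
    assume "(\<lambda>i. x i - al i) = al"
    then have "x = (\<lambda>i. 2 * al i)" by (auto simp: fun_eq_iff dest: fun_cong)
    then show False using double_not_root[OF alP(2)] x(1) Psi_root by auto
  qed
qed

\<comment> \<open>Induction on m: subtracting al from whichever summand pairs positively with cor al.\<close>
lemma simple_not_sum_multiple:
  assumes al: "al \<in> Delta"
  shows "b \<in> Psi \<inter> P \<Longrightarrow> g \<in> Psi \<inter> P \<Longrightarrow> b \<noteq> al \<Longrightarrow>
     (\<lambda>i. b i + g i) = (\<lambda>i. int m * al i) \<Longrightarrow> m \<ge> 1 \<Longrightarrow> False"
proof (induction m arbitrary: b g)
  case (Suc m)
  have alP: "al \<in> Phi" using Delta_root[OF al] by auto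
  show False
  proof (cases "m = 0")
    case True
    then have "al = (\<lambda>i. b i + g i)" using Suc.prems(4) by (simp add: fun_eq_iff)
    then show False using al Suc.prems(1,2) unfolding Delta_iff by blast
  next
    case False
    then have m1: "m \<ge> 1" by simp
    show False
    proof (cases "g = al")
      case True
      then have bm: "b = (\<lambda>i. int m * al i)" using Suc.prems(4)
        by (auto simp: fun_eq_iff algebra_simps dest: fun_cong)
      then have "m \<noteq> 1" using Suc.prems(3) by auto
      then show False using no_multiple_root[OF alP, of "int m"] m1 bm Suc.prems(1) Psi_root by auto
    next
      case g_ne: False
      have "pair (\<lambda>i. b i + g i) (cor al) = int (Suc m) * 2"
        unfolding Suc.prems(4) using pair_cor[OF alP] by simp
      then have "pair b (cor al) + pair g (cor al) > 0" by simp
      then have "pair b (cor al) > 0 \<or> pair g (cor al) > 0" by linarith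
      then show False
      proof
        assume "pair b (cor al) > 0"
        note b' = pos_diff_simple[OF al Suc.prems(1,3) this]
        have "(\<lambda>i. (b i - al i) + g i) = (\<lambda>i. int m * al i)"
          using Suc.prems(4) by (auto simp: fun_eq_iff algebra_simps dest: fun_cong)
        then show False using Suc.IH[OF b'(1) Suc.prems(2) b'(2) _ m1] by simp
      next
        assume "pair g (cor al) > 0"
        note g' = pos_diff_simple[OF al Suc.prems(2) g_ne this]
        have "(\<lambda>i. b i + (g i - al i)) = (\<lambda>i. int m * al i)"
          using Suc.prems(4) by (auto simp: fun_eq_iff algebra_simps dest: fun_cong)
        then show False using Suc.IH[OF Suc.prems(1) g'(1) Suc.prems(3) _ m1] by simp
      qed
    qed
  qed
qed simp

lemma refl_simple_pos:
  assumes al: "al \<in> Delta" and b: "b \<in> Psi \<inter> P" and ne: "b \<noteq> al"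
  shows "refl_ch al (cor al) b \<in> P"
proof -
  have alP: "al \<in> Psi" "al \<in> P" using Delta_root[OF al] by auto
  define k where "k = pair b (cor al)"
  have sb: "refl_ch al (cor al) b = (\<lambda>i. b i - k * al i)" by (simp add: refl_ch_def k_def)
  have sbPsi: "refl_ch al (cor al) b \<in> Psi" using Psi_refl_closed alP b by auto
  show ?thesis
  proof (cases "k \<le> 0")
    case True
    have "F al > 0" "F b > 0" using alP(2) b pos_iff by auto
    moreover have "real_of_int k * F al \<le> 0" using True \<open>F al > 0\<close>
      by (simp add: mult_nonpos_nonneg)
    ultimately have "F (\<lambda>i. b i - k * al i) > 0" by simp
    then show ?thesis using sb sbPsi Psi_root pos_iff by auto
  next
    case False
    show ?thesis
    proof (rule ccontr)
      assume "refl_ch al (cor al) b \<notin> P"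
      then have "(\<lambda>i. - (b i - k * al i)) \<in> Psi \<inter> P"
        using minus_pos_iff[OF Psi_root[OF sbPsi]] Psi_minus[OF sbPsi] sb by simp
      moreover have "(\<lambda>i. b i + - (b i - k * al i)) = (\<lambda>i. int (nat k) * al i)" using False by simp
      moreover have "nat k \<ge> 1" using False by simp
      ultimately show False using simple_not_sum_multiple[OF al b _ ne] by blast
    qed
  qed
qed

abbreviation SDelta where "SDelta \<equiv> {rrefl cor a | a. a \<in> Delta}"
abbreviation WPsi where "WPsi \<equiv> gen {rrefl cor a | a. a \<in> Psi}"

lemma WPsi_W: "WPsi \<subseteq> gen Refls" by (rule gen_mono) (use Psi_root in blast)
lemma gen_SDelta_WPsi: "gen SDelta \<subseteq> WPsi" by (rule gen_mono) (use Delta_root in blast)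
lemma gen_SDelta_W: "gen SDelta \<subseteq> gen Refls" using gen_SDelta_WPsi WPsi_W by blast

lemma act_root_Psi: "w \<in> WPsi \<Longrightarrow> a \<in> Psi \<Longrightarrow> act_root w a \<in> Psi"
proof (induction w arbitrary: a rule: gen.induct)
  case gen_id then show ?case using act_root_id[OF Psi_root] by metis
next
  case (gen_step s w)
  then obtain c where s: "s = rrefl cor c" and c: "c \<in> Psi" by auto
  have w: "w \<in> gen Refls" using gen_step(2) WPsi_W by blast
  have "act_root (s \<circ> w) a = act_root s (act_root w a)"
    using act_root_comp[OF _ w] s c Psi_root gen_step(4) rrefl_in_W by simp
  also have "\<dots> = refl_ch c (cor c) (act_root w a)"
    using s act_root_rrefl c Psi_root gen_step act_root_props(1)[OF w] by simp
  finally have e: "act_root (s \<circ> w) a = refl_ch c (cor c) (act_root w a)" .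
  show ?case unfolding e by (rule Psi_refl_closed[OF c gen_step(3)[OF gen_step(4)]])
qed

lemma act_root_pos_image:
  assumes w: "w \<in> gen Refls" and pos: "\<forall>a\<in>Psi \<inter> P. act_root w a \<in> P"
  shows "act_root w ` (Psi \<inter> P) = act_root w ` Psi \<inter> P"
proof
  show "act_root w ` (Psi \<inter> P) \<subseteq> act_root w ` Psi \<inter> P" using pos by blast
  show "act_root w ` Psi \<inter> P \<subseteq> act_root w ` (Psi \<inter> P)"
  proof
    fix b assume "b \<in> act_root w ` Psi \<inter> P"
    then obtain a where a: "a \<in> Psi" "b = act_root w a" and b: "b \<in> P" by blast
    have "a \<in> P"
    proof (rule ccontr)
      assume "a \<notin> P"
      then have "(\<lambda>i. - a i) \<in> Psi \<inter> P" using a(1) Psi_minus minus_pos_iff Psi_root by blast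
      then have "act_root w (\<lambda>i. - a i) \<in> P" using pos by blast
      then have "(\<lambda>i. - b i) \<in> P" using act_root_minus[OF w Psi_root[OF a(1)]] a(2) by simp
      then show False using b minus_pos_iff pos_subset by blast
    qed
    then show "b \<in> act_root w ` (Psi \<inter> P)" using a by blast
  qed
qed

lemma exists_simple_B:
  "a \<in> Psi \<inter> P \<Longrightarrow> B l a > 0 \<Longrightarrow> \<exists>al\<in>Delta. B l al > 0"
proof (induction "F_rank a" arbitrary: a rule: less_induct)
  case less
  show ?case
  proof (cases "a \<in> Delta")
    case True then show ?thesis using less by blast
  next
    case False
    then obtain b c where bc: "b \<in> Psi \<inter> P" "c \<in> Psi \<inter> P" "a = (\<lambda>i. b i + c i)"
      using less.prems Delta_iff by blast
    have Fb: "F b > 0" "F c > 0" using bc pos_iff by auto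
    have "F b < F a" "F c < F a" using bc Fb by simp_all
    then have F_rank: "F_rank b < F_rank a" "F_rank c < F_rank a" using F_rank_less bc pos_iff by auto
    have "B l b + B l c > 0" using less.prems bc by simp
    then have "B l b > 0 \<or> B l c > 0" by linarith
    then show ?thesis using less.hyps F_rank bc by blast
  qed
qed

lemma exists_simple_pos: "a \<in> Psi \<inter> P \<Longrightarrow> \<exists>al\<in>Delta. pair a (cor al) > 0"
proof -
  assume a: "a \<in> Psi \<inter> P"
  then have "a \<in> Phi" using Psi_root by simp
  then have "B a a > 0" using B_root_ge_4[of a] by simp
  then obtain al where al: "al \<in> Delta" "B a al > 0" using exists_simple_B a by blast
  have "2 * B a al = pair a (cor al) * B al al" using B_cartan Delta_root al by blast
  moreover have "al \<in> Phi" using Delta_root al by simp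
  then have "B al al > 0" using B_root_ge_4[of al] by simp
  ultimately have "pair a (cor al) * B al al > 0" using al(2) by simp
  then have "pair a (cor al) > 0" using \<open>B al al > 0\<close> by (simp add: zero_less_mult_iff)
  then show ?thesis using al by blast
qed

lemma rrefl_refl_ch:
  assumes al: "al \<in> Phi" and a: "a \<in> Phi"
  shows "rrefl cor (refl_ch al (cor al) a) = rrefl cor al \<circ> rrefl cor a \<circ> rrefl cor al"
proof -
  have "rrefl cor al \<circ> rrefl cor a = rrefl cor (act_root (rrefl cor al) a) \<circ> rrefl cor al"
    using comp_rrefl[OF rrefl_in_W[OF al] a] .
  also have "act_root (rrefl cor al) a = refl_ch al (cor al) a" using act_root_rrefl[OF a al] .
  finally have "rrefl cor al \<circ> rrefl cor a \<circ> rrefl cor al = rrefl cor (refl_ch al (cor al) a) \<circ> (rrefl cor al \<circ> rrefl cor al)"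
    by (metis comp_assoc)
  then show ?thesis using rrefl_invol[OF al] by (metis comp_id)
qed

lemma rrefl_pos_conj_simple:
  "a \<in> Psi \<inter> P \<Longrightarrow> \<exists>g g' al. g \<in> gen SDelta \<and> g' \<in> gen SDelta \<and> g' \<circ> g = id \<and> al \<in> Delta \<and>
      rrefl cor a = g \<circ> rrefl cor al \<circ> g'"
proof (induction "F_rank a" arbitrary: a rule: less_induct)
  case less
  show ?case
  proof (cases "a \<in> Delta")
    case True
    then show ?thesis using gen.gen_id[of SDelta] by (intro exI[of _ id] exI[of _ a]) auto
  next
    case False
    obtain al where al: "al \<in> Delta" "pair a (cor al) > 0" using exists_simple_pos less.prems by blast
    have alP: "al \<in> Psi" "al \<in> P" "al \<in> Phi" using Delta_root al by auto
    have aP: "a \<in> Psi" "a \<in> P" "a \<in> Phi" using less.prems Psi_root by auto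
    define a' where "a' = refl_ch al (cor al) a"
    have ne: "a \<noteq> al" using False al by blast
    have a'P: "a' \<in> Psi" "a' \<in> P" "a' \<in> Phi"
      using Psi_refl_closed[OF alP(1) aP(1)] refl_simple_pos[OF al(1) less.prems ne] Psi_root a'_def by auto
    have "F a' = F a - of_int (pair a (cor al)) * F al" unfolding a'_def refl_ch_def by simp
    moreover have "of_int (pair a (cor al)) * F al > 0" using al(2) alP(2) pos_iff by simp
    ultimately have "F a' < F a" by simp
    then have "F_rank a' < F_rank a" using F_rank_less a'P by simp
    then obtain g g' al' where IH: "g \<in> gen SDelta" "g' \<in> gen SDelta" "g' \<circ> g = id" "al' \<in> Delta"
       "rrefl cor a' = g \<circ> rrefl cor al' \<circ> g'" using less.hyps a'P by blast
    have sa: "rrefl cor al \<in> gen SDelta" by (rule gen_base) (use al(1) in blast)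
    have "refl_ch al (cor al) a' = a" unfolding a'_def using refl_ch_invol[OF pair_cor[OF alP(3)]] by simp
    then have "rrefl cor a = rrefl cor al \<circ> rrefl cor a' \<circ> rrefl cor al"
      using rrefl_refl_ch[OF alP(3) a'P(3)] by metis
    also have "\<dots> = (rrefl cor al \<circ> g) \<circ> rrefl cor al' \<circ> (g' \<circ> rrefl cor al)"
      using IH(5) by (metis comp_assoc)
    finally have eq: "rrefl cor a = (rrefl cor al \<circ> g) \<circ> rrefl cor al' \<circ> (g' \<circ> rrefl cor al)" .
    have "(g' \<circ> rrefl cor al) \<circ> (rrefl cor al \<circ> g) = id"
      using IH(3) rrefl_invol[OF alP(3)] by (metis comp_assoc comp_id)
    then show ?thesis using eq gen_comp[OF sa IH(1)] gen_comp[OF IH(2) sa] IH(4) by blast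
  qed
qed

lemma rrefl_pos_exists: "a \<in> Psi \<Longrightarrow> \<exists>b\<in>Psi \<inter> P. rrefl cor a = rrefl cor b"
proof -
  assume a: "a \<in> Psi"
  show ?thesis
  proof (cases "a \<in> P")
    case True then show ?thesis using a by blast
  next
    case False
    then have "(\<lambda>i. - a i) \<in> Psi \<inter> P" using minus_pos_iff Psi_root a Psi_minus by auto
    then show ?thesis using rrefl_minus Psi_root a by metis
  qed
qed

lemma rrefl_in_gen_SDelta: "a \<in> Psi \<Longrightarrow> rrefl cor a \<in> gen SDelta"
proof -
  assume "a \<in> Psi"
  then obtain b where b: "b \<in> Psi \<inter> P" "rrefl cor a = rrefl cor b" using rrefl_pos_exists by blast
  obtain g g' al where "g \<in> gen SDelta" "g' \<in> gen SDelta" "al \<in> Delta" "rrefl cor b = g \<circ> rrefl cor al \<circ> g'"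
    using rrefl_pos_conj_simple[OF b(1)] by blast
  then show ?thesis using b(2) gen_comp gen_base by (metis (mono_tags, lifting) mem_Collect_eq)
qed

lemma WPsi_eq_gen_SDelta: "WPsi = gen SDelta"
proof
  show "gen SDelta \<subseteq> WPsi" by (rule gen_SDelta_WPsi)
  show "WPsi \<subseteq> gen SDelta"
  proof
    fix u assume "u \<in> WPsi" then show "u \<in> gen SDelta"
    proof (induction u rule: gen.induct)
      case gen_id then show ?case by (rule gen.gen_id)
    next
      case (gen_step s w) then show ?case using rrefl_in_gen_SDelta gen_comp by blast
    qed
  qed
qed

lemma rrefl_in_crefls: "a \<in> Psi \<Longrightarrow> rrefl cor a \<in> crefls SDelta WPsi"
proof -
  assume "a \<in> Psi"
  then obtain b where b: "b \<in> Psi \<inter> P" "rrefl cor a = rrefl cor b" using rrefl_pos_exists by blast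
  obtain g g' al where gg: "g \<in> gen SDelta" "g' \<in> gen SDelta" "g' \<circ> g = id" "al \<in> Delta"
      "rrefl cor b = g \<circ> rrefl cor al \<circ> g'"
    using rrefl_pos_conj_simple[OF b(1)] by blast
  have gW: "g \<in> WPsi" "g' \<in> WPsi" using gg(1,2) gen_SDelta_WPsi by auto
  have sal: "rrefl cor al \<in> SDelta" using gg(4) by blast
  have e: "rrefl cor a = g \<circ> rrefl cor al \<circ> g'" using b(2) gg(5) by simp
  show ?thesis unfolding crefls_def using e gW gg(3) sal by blast
qed

lemma crefls_rrefl_pos: "t \<in> crefls SDelta WPsi \<Longrightarrow> \<exists>b\<in>Psi \<inter> P. t = rrefl cor b"
proof -
  assume "t \<in> crefls SDelta WPsi"
  then obtain g s g' where t: "t = g \<circ> s \<circ> g'" "g \<in> WPsi" "g' \<in> WPsi" "g' \<circ> g = id" "s \<in> SDelta"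
    unfolding crefls_def by blast
  obtain al where al: "al \<in> Delta" "s = rrefl cor al" using t(5) by blast
  have g: "g \<in> gen Refls" using t(2) WPsi_W by blast
  obtain h where h: "h \<circ> g = id" "g \<circ> h = id" using W_inv[OF g] by blast
  have "g' = h" using t(4) h(2) by (metis comp_assoc comp_id id_comp)
  then have gg: "g \<circ> g' = id" using h by simp
  have "g \<circ> s = rrefl cor (act_root g al) \<circ> g" using comp_rrefl[OF g] al Delta_root by blast
  then have "t = rrefl cor (act_root g al)" using t(1) gg by (metis comp_assoc comp_id)
  moreover have "act_root g al \<in> Psi" using act_root_Psi[OF t(2)] al Delta_root by blast
  ultimately show ?thesis using rrefl_pos_exists by metis
qed

lemma simple_refl_cancel:
  assumes al: "al \<in> Delta" and w: "w \<in> gen SDelta" and b: "b \<in> Psi \<inter> P"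
    and pos: "act_root w b \<in> P" and neg: "act_root (rrefl cor al \<circ> w) b \<notin> P"
  shows "rrefl cor al \<circ> w \<circ> rrefl cor b = w"
proof -
  have alP: "al \<in> Phi" using Delta_root[OF al] by auto
  have wR: "w \<in> gen Refls" using w gen_SDelta_W by blast
  have bP: "b \<in> Phi" "b \<in> Psi" using b Psi_root by auto
  have wb: "act_root w b \<in> Psi" using act_root_Psi w gen_SDelta_WPsi bP(2) by blast
  have "act_root (rrefl cor al \<circ> w) b = refl_ch al (cor al) (act_root w b)"
    using act_root_comp[OF rrefl_in_W[OF alP] wR bP(1)] act_root_rrefl[OF Psi_root[OF wb] alP] by simp
  then have "refl_ch al (cor al) (act_root w b) \<notin> P" using neg by simp
  then have "act_root w b = al" using refl_simple_pos[OF al] wb pos by blast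
  then have "rrefl cor al \<circ> w \<circ> rrefl cor b = rrefl cor al \<circ> rrefl cor al \<circ> w"
    using comp_rrefl[OF wR bP(1)] by (simp add: comp_assoc)
  then show ?thesis using rrefl_invol[OF alP] by simp
qed

lemma exchange:
  "set ws \<subseteq> SDelta \<Longrightarrow> b \<in> Psi \<inter> P \<Longrightarrow> act_root (foldr (\<circ>) ws id) b \<notin> P \<Longrightarrow>
   \<exists>ws'. set ws' \<subseteq> SDelta \<and> length ws' < length ws \<and> foldr (\<circ>) ws' id = foldr (\<circ>) ws id \<circ> rrefl cor b"
proof (induction ws)
  case Nil
  then have "act_root id b \<notin> P" by (metis foldr.simps(1) id_apply)
  moreover have "act_root id b = b" using act_root_id Psi_root Nil.prems(2) by blast
  ultimately show ?case using Nil.prems(2) by auto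
next
  case (Cons t rest)
  obtain al where al: "al \<in> Delta" "t = rrefl cor al" using Cons.prems(1) by auto
  define w where "w = foldr (\<circ>) rest id"
  have rest: "set rest \<subseteq> SDelta" using Cons.prems(1) by simp
  then have w: "w \<in> gen SDelta" unfolding w_def by (rule gen_foldr)
  have tw: "foldr (\<circ>) (t # rest) id = t \<circ> w" using foldr_cons_comp w_def by metis
  show ?case
  proof (cases "act_root w b \<in> P")
    case False
    then obtain ws' where ws': "set ws' \<subseteq> SDelta" "length ws' < length rest"
        "foldr (\<circ>) ws' id = w \<circ> rrefl cor b"
      using Cons.IH[OF rest Cons.prems(2)] unfolding w_def by blast
    have "foldr (\<circ>) (t # ws') id = foldr (\<circ>) (t # rest) id \<circ> rrefl cor b"
      using tw ws'(3) foldr_cons_comp by (metis comp_assoc)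
    moreover have "set (t # ws') \<subseteq> SDelta" using ws'(1) Cons.prems(1) by simp
    moreover have "length (t # ws') < length (t # rest)" using ws'(2) by simp
    ultimately show ?thesis by blast
  next
    case True
    have "act_root (rrefl cor al \<circ> w) b \<notin> P" using Cons.prems(3) unfolding tw unfolding al(2) .
    then have "t \<circ> w \<circ> rrefl cor b = w"
      unfolding al(2) by (rule simple_refl_cancel[OF al(1) w Cons.prems(2) True])
    then have "foldr (\<circ>) rest id = foldr (\<circ>) (t # rest) id \<circ> rrefl cor b"
      using tw w_def by (simp add: comp_assoc)
    moreover have "length rest < length (t # rest)" by simp
    ultimately show ?thesis using rest by blast
  qed
qed

lemma clen_comp_rrefl_less: "w \<in> gen SDelta \<Longrightarrow> b \<in> Psi \<inter> P \<Longrightarrow> act_root w b \<notin> P \<Longrightarrow> clen SDelta (w \<circ> rrefl cor b) < clen SDelta w"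
proof -
  assume w: "w \<in> gen SDelta" and b: "b \<in> Psi \<inter> P" and n: "act_root w b \<notin> P"
  obtain ws where ws: "set ws \<subseteq> SDelta" "foldr (\<circ>) ws id = w" "length ws = clen SDelta w"
    using reduced_word_exists[OF w] by blast
  obtain ws' where ws': "set ws' \<subseteq> SDelta" "length ws' < length ws" "foldr (\<circ>) ws' id = w \<circ> rrefl cor b"
    using exchange[OF ws(1) b] n ws(2) by auto
  have "clen SDelta (w \<circ> rrefl cor b) \<le> length ws'" using clen_le_length[OF ws'(1,3)] .
  then show ?thesis using ws'(2) ws(3) by simp
qed

lemma clen_less_comp_rrefl: "w \<in> gen SDelta \<Longrightarrow> b \<in> Psi \<inter> P \<Longrightarrow> act_root w b \<in> P \<Longrightarrow> clen SDelta w < clen SDelta (w \<circ> rrefl cor b)"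
proof -
  assume w: "w \<in> gen SDelta" and b: "b \<in> Psi \<inter> P" and p: "act_root w b \<in> P"
  have bP: "b \<in> Phi" "b \<in> Psi" using b Psi_root by auto
  have sb: "rrefl cor b \<in> gen SDelta" using rrefl_in_gen_SDelta bP by simp
  define w1 where "w1 = w \<circ> rrefl cor b"
  have w1: "w1 \<in> gen SDelta" using gen_comp[OF w sb] w1_def by simp
  have wR: "w \<in> gen Refls" using w gen_SDelta_W by blast
  have "act_root w1 b = act_root w (act_root (rrefl cor b) b)" using act_root_comp[OF wR rrefl_in_W[OF bP(1)] bP(1)] w1_def by simp
  also have "\<dots> = act_root w (\<lambda>i. - b i)" using act_root_rrefl[OF bP(1) bP(1)] refl_ch_self[OF pair_cor[OF bP(1)]] by simp
  also have "\<dots> = (\<lambda>i. - act_root w b i)" using act_root_minus[OF wR bP(1)] .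
  finally have "act_root w1 b \<notin> P" using minus_pos_iff p pos_subset by auto
  then have "clen SDelta (w1 \<circ> rrefl cor b) < clen SDelta w1" using clen_comp_rrefl_less[OF w1 b] by simp
  moreover have "w1 \<circ> rrefl cor b = w" using w1_def rrefl_invol[OF bP(1)] by (simp add: comp_assoc)
  ultimately show ?thesis using w1_def by simp
qed

end

section \<open>Character sheaves and blocks\<close>

context based_root_datum begin

lemma closed_subsystem_Phi: "closed_subsystem Phi cor P f Phi"
  by unfold_locales (auto simp: refl_ch_root)

lemma closed_subsystem_PhiL:
  assumes L: "multiplicative L"
  shows "closed_subsystem Phi cor P f (PhiL Phi cor L)"
proof unfold_locales
  show "PhiL Phi cor L \<subseteq> Phi" by (auto simp: PhiL_def)
  fix a b assume "a \<in> PhiL Phi cor L" and "b \<in> PhiL Phi cor L"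
  then have a: "a \<in> Phi" "L (cor a) = 1" and b: "b \<in> Phi" "L (cor b) = 1"
    by (auto simp: PhiL_def)
  have "L (cor (refl_ch a (cor a) b)) = L (refl_coch a (cor a) (cor b))"
    by (simp only: cor_refl_ch[OF b(1) a(1)])
  also have "\<dots> = L (cor b)"
    unfolding refl_coch_def by (rule multiplicative_shift[OF L, OF a(2)])
  finally show "refl_ch a (cor a) b \<in> PhiL Phi cor L"
    using refl_ch_root[OF a(1) b(1)] b(2) by (simp add: PhiL_def)
qed

lemma Wo_fixes_char:
  assumes L: "multiplicative L" and x: "x \<in> Wo Phi cor L"
  shows "L (x y) = L y"
  using x unfolding Wo_def
proof (induction x arbitrary: y rule: gen.induct)
  case (gen_step s w)
  then obtain a where s: "s = rrefl cor a" and a: "L (cor a) = 1" by (auto simp: PhiL_def)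
  have "L (s (w y)) = L (w y)"
    using multiplicative_shift[OF L, OF a] by (simp add: s rrefl_apply)
  then show ?case using gen_step.IH by simp
qed simp

lemma W_inj:
  assumes "w \<in> gen Refls" shows "inj w"
proof -
  obtain w' where "w' \<circ> w = id" using W_inv[OF assms] by blast
  then show "inj w" by (metis comp_apply id_apply injI)
qed

lemma act_apply_W:
  assumes "w \<in> gen Refls" and "act w L = L'"
  shows "L' (w y) = L y"
  using assms inv_f_f[OF W_inj[OF assms(1)]] by (auto simp: act_def)

lemma act_root_PhiL:
  "w \<in> gen Refls \<Longrightarrow> (\<And>y. L' (w y) = L y) \<Longrightarrow> a \<in> PhiL Phi cor L \<Longrightarrow> act_root w a \<in> PhiL Phi cor L'"
  by (auto simp: PhiL_def act_root_props)

lemma act_root_PhiL_image: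
  assumes w: "w \<in> gen Refls" and LL: "\<And>y. L' (w y) = L y"
  shows "act_root w ` PhiL Phi cor L = PhiL Phi cor L'"
proof
  show "act_root w ` PhiL Phi cor L \<subseteq> PhiL Phi cor L'"
    using act_root_PhiL[where L'=L' and L=L, OF w LL] by blast
  obtain w' where w': "w' \<in> gen Refls" "w \<circ> w' = id" using W_inv[OF w] by blast
  have LL': "L (w' y) = L' y" for y using LL[of "w' y"] w'(2) by (metis comp_apply id_apply)
  show "PhiL Phi cor L' \<subseteq> act_root w ` PhiL Phi cor L"
  proof
    fix b assume b: "b \<in> PhiL Phi cor L'"
    then have "b = act_root w (act_root w' b)"
      using act_root_comp[OF w w'(1)] act_root_id w'(2) by (simp add: PhiL_def)
    then show "b \<in> act_root w ` PhiL Phi cor L"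
      using act_root_PhiL[where L'=L and L=L', OF w'(1) LL' b] by blast
  qed
qed

lemma conj_Wo:
  assumes v: "v \<in> gen Refls" "v' \<in> gen Refls" "v \<circ> v' = id" "v' \<circ> v = id"
    and LL: "\<And>y. L' (v y) = L y" and y: "y \<in> Wo Phi cor L'"
  shows "v' \<circ> y \<circ> v \<in> Wo Phi cor L"
proof -
  have LL': "L (v' y) = L' y" for y using LL[of "v' y"] v(3) by (metis comp_apply id_apply)
  have "v' \<circ> t \<circ> v \<in> gen {rrefl cor a |a. a \<in> PhiL Phi cor L}"
    if t_in: "t \<in> {rrefl cor a |a. a \<in> PhiL Phi cor L'}" for t
  proof -
    obtain a where t: "t = rrefl cor a" and a: "a \<in> PhiL Phi cor L'" using t_in by auto
    have "v' \<circ> t = rrefl cor (act_root v' a) \<circ> v'"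
      using comp_rrefl[OF v(2)] t a by (simp add: PhiL_def)
    then have "v' \<circ> t \<circ> v = rrefl cor (act_root v' a)" using v(4) by (metis comp_assoc comp_id)
    moreover have "act_root v' a \<in> PhiL Phi cor L"
      using act_root_PhiL[where L'=L and L=L', OF v(2) LL' a] .
    ultimately show ?thesis by (auto intro: gen_base)
  qed
  then show ?thesis using gen_conj[OF v(3,4)] y unfolding Wo_def by blast
qed

end

sublocale based_root_datum \<subseteq> W: closed_subsystem Phi cor P f Phi
  by (rule closed_subsystem_Phi)

context based_root_datum begin

lemma SDelta_Phi_eq: "W.SDelta = Wsimple cor P"
  unfolding W.Delta_def Wsimple_def using pos_subset by (simp add: Int_absorb1)

lemma WPsi_Phi_eq: "W.WPsi = Wgrp Phi cor" by (simp add: Wgrp_def)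

lemma W_eq_gen_simple: "gen Refls = gen W.SDelta" using W.WPsi_eq_gen_SDelta by simp

end

context closed_subsystem begin

lemma bruhat_step_left_mult_pos:
  assumes u: "u \<in> gen Refls" and pos: "\<forall>a\<in>Psi \<inter> P. act_root u a \<in> P"
    and y: "y \<in> WPsi" and yz: "bruhat_step SDelta WPsi y z"
  shows "bruhat_step (Wsimple cor P) (Wgrp Phi cor) (u \<circ> y) (u \<circ> z)" and "z \<in> WPsi"
proof -
  obtain t where t: "t \<in> crefls SDelta WPsi" "z = y \<circ> t" "clen SDelta y < clen SDelta z"
    using yz unfolding bruhat_step_iff by blast
  obtain b where b: "b \<in> Psi \<inter> P" "t = rrefl cor b" using crefls_rrefl_pos[OF t(1)] by blast
  have bP: "b \<in> Phi" "b \<in> Psi" using b Psi_root by auto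
  have yR: "y \<in> gen Refls" using y WPsi_W by blast
  have "act_root y b \<in> P"
  proof (rule ccontr)
    assume "act_root y b \<notin> P"
    then have "clen SDelta (y \<circ> rrefl cor b) < clen SDelta y"
      using clen_comp_rrefl_less b(1) y WPsi_eq_gen_SDelta by simp
    then show False using t b(2) by simp
  qed
  moreover have "act_root y b \<in> Psi" using act_root_Psi[OF y bP(2)] .
  ultimately have "act_root (u \<circ> y) b \<in> P" using pos act_root_comp[OF u yR bP(1)] by simp
  moreover have "u \<circ> y \<in> gen W.SDelta" using gen_comp[OF u yR] W_eq_gen_simple by simp
  ultimately have "clen W.SDelta (u \<circ> y) < clen W.SDelta (u \<circ> y \<circ> rrefl cor b)"
    using W.clen_less_comp_rrefl b(1) bP by simp
  then have "clen (Wsimple cor P) (u \<circ> y) < clen (Wsimple cor P) (u \<circ> z)"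
    using t(2) b(2) SDelta_Phi_eq by (simp add: comp_assoc)
  moreover have "t \<in> crefls (Wsimple cor P) (Wgrp Phi cor)"
    using W.rrefl_in_crefls bP b(2) SDelta_Phi_eq WPsi_Phi_eq by simp
  moreover have "u \<circ> z = (u \<circ> y) \<circ> t" using t(2) by (simp add: comp_assoc)
  ultimately show "bruhat_step (Wsimple cor P) (Wgrp Phi cor) (u \<circ> y) (u \<circ> z)"
    unfolding bruhat_step_iff by blast
  show "z \<in> WPsi" using t(2) b(2) gen_comp[OF y gen_base[of t]] bP(2) by blast
qed

lemma bruhat_left_mult_pos:
  assumes u: "u \<in> gen Refls" and pos: "\<forall>a\<in>Psi \<inter> P. act_root u a \<in> P"
    and x'x: "bruhat SDelta WPsi x' x"
  shows "bruhat (Wsimple cor P) (Wgrp Phi cor) (u \<circ> x') (u \<circ> x)"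
proof -
  have x': "x' \<in> WPsi" and x: "x \<in> WPsi" and chain: "(bruhat_step SDelta WPsi)\<^sup>*\<^sup>* x' x"
    using x'x unfolding bruhat_iff_steps by auto
  have "(bruhat_step (Wsimple cor P) (Wgrp Phi cor))\<^sup>*\<^sup>* (u \<circ> x') (u \<circ> z) \<and> z \<in> WPsi"
    if "(bruhat_step SDelta WPsi)\<^sup>*\<^sup>* x' z" for z
    using that
  proof (induction rule: rtranclp_induct)
    case (step y z)
    then show ?case
      using bruhat_step_left_mult_pos[OF u pos] by (meson rtranclp.rtrancl_into_rtrancl)
  qed (simp add: x')
  moreover have "u \<circ> x' \<in> Wgrp Phi cor" "u \<circ> x \<in> Wgrp Phi cor"
    using gen_comp[OF u] WPsi_W x' x unfolding Wgrp_def by blast+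
  ultimately show ?thesis unfolding bruhat_iff_steps using chain by blast
qed

lemma wmin_coset_pos:
  assumes u: "u \<in> gen Refls" and pos: "\<forall>a\<in>Psi \<inter> P. act_root u a \<in> P"
  shows "wmin Phi cor P ((\<lambda>x. u \<circ> x) ` WPsi) = u"
  unfolding wmin_def
proof (rule the_equality)
  have "bruhat SDelta WPsi id x" if "x \<in> WPsi" for x
    using bruhat_id_le[of x SDelta] that WPsi_eq_gen_SDelta by simp
  then have "bruhat (Wsimple cor P) (Wgrp Phi cor) (u \<circ> id) (u \<circ> x)" if "x \<in> WPsi" for x
    using bruhat_left_mult_pos[OF u pos] that by blast
  then have low: "\<forall>w\<in>(\<lambda>x. u \<circ> x) ` WPsi. bruhat (Wsimple cor P) (Wgrp Phi cor) u w" by auto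
  moreover have u_in: "u \<in> (\<lambda>x. u \<circ> x) ` WPsi"
    by (rule image_eqI[where x = id]) (simp, rule gen.gen_id)
  ultimately show "u \<in> (\<lambda>x. u \<circ> x) ` WPsi \<and> (\<forall>w\<in>(\<lambda>x. u \<circ> x) ` WPsi. bruhat (Wsimple cor P) (Wgrp Phi cor) u w)"
    by blast
  fix v assume "v \<in> (\<lambda>x. u \<circ> x) ` WPsi \<and> (\<forall>w\<in>(\<lambda>x. u \<circ> x) ` WPsi. bruhat (Wsimple cor P) (Wgrp Phi cor) v w)"
  then have "bruhat (Wsimple cor P) (Wgrp Phi cor) v u" "bruhat (Wsimple cor P) (Wgrp Phi cor) u v"
    using u_in low by blast+
  then show "v = u" by (rule bruhat_antisym)
qed

\<comment> \<open>The representative is an element of minimal length in the coset.\<close>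
lemma coset_pos_rep:
  assumes c: "c \<in> gen Refls"
  obtains x0 where "x0 \<in> WPsi" and "\<forall>a\<in>Psi \<inter> P. act_root (c \<circ> x0) a \<in> P"
    and "(\<lambda>x. (c \<circ> x0) \<circ> x) ` WPsi = (\<lambda>x. c \<circ> x) ` WPsi"
proof -
  obtain x0 where x0: "x0 \<in> WPsi"
    and least: "\<And>y. y \<in> WPsi \<Longrightarrow> clen W.SDelta (c \<circ> x0) \<le> clen W.SDelta (c \<circ> y)"
    using ex_has_least_nat[of "\<lambda>x. x \<in> WPsi" id "\<lambda>x. clen W.SDelta (c \<circ> x)"] gen.gen_id by blast
  have cx0: "c \<circ> x0 \<in> gen W.SDelta" using gen_comp[OF c] x0 WPsi_W W_eq_gen_simple by blast
  have pos: "\<forall>a\<in>Psi \<inter> P. act_root (c \<circ> x0) a \<in> P"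
  proof (intro ballI, rule ccontr)
    fix a assume a: "a \<in> Psi \<inter> P" and "act_root (c \<circ> x0) a \<notin> P"
    then have "clen W.SDelta (c \<circ> (x0 \<circ> rrefl cor a)) < clen W.SDelta (c \<circ> x0)"
      using W.clen_comp_rrefl_less[OF cx0] a Psi_root by (simp add: comp_assoc)
    moreover have "x0 \<circ> rrefl cor a \<in> WPsi"
      using gen_comp[OF x0 gen_base[of "rrefl cor a"]] a by blast
    ultimately show False using least[of "x0 \<circ> rrefl cor a"] by linarith
  qed
  have "(\<lambda>x. (c \<circ> x0) \<circ> x) ` WPsi = (\<lambda>x. c \<circ> x) ` WPsi"
    by (rule gen_coset_eq[OF _ x0]) (auto simp: rrefl_invol Psi_root)
  with x0 pos show ?thesis by (rule that)
qed

end


context based_root_datum begin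

lemma Wo_eq_gen_SL:
  assumes L: "multiplicative L" shows "Wo Phi cor L = gen (SL Phi cor P L)"
proof -
  interpret S: closed_subsystem Phi cor P f "PhiL Phi cor L" by (rule closed_subsystem_PhiL[OF L])
  show ?thesis using S.WPsi_eq_gen_SDelta by (simp add: Wo_def SL_def S.Delta_def)
qed

lemma block_pos_rep:
  assumes L: "multiplicative L" and bl: "\<beta> \<in> blocks Phi cor L' L"
  obtains u where "u \<in> gen Refls" and "\<beta> = (\<lambda>x. u \<circ> x) ` Wo Phi cor L"
    and "\<forall>a\<in>PhiL Phi cor L \<inter> P. act_root u a \<in> P" and "\<And>y. L' (u y) = L y"
    and "wmin Phi cor P \<beta> = u"
proof -
  interpret S: closed_subsystem Phi cor P f "PhiL Phi cor L" by (rule closed_subsystem_PhiL[OF L])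
  obtain c where c: "\<beta> = (\<lambda>x. c \<circ> x) ` Wo Phi cor L" "c \<in> gen Refls" "act c L = L'"
    using bl unfolding blocks_def Wgrp_def by blast
  obtain x0 where x0: "x0 \<in> Wo Phi cor L" and pos: "\<forall>a\<in>PhiL Phi cor L \<inter> P. act_root (c \<circ> x0) a \<in> P"
    and coset: "(\<lambda>x. (c \<circ> x0) \<circ> x) ` Wo Phi cor L = (\<lambda>x. c \<circ> x) ` Wo Phi cor L"
    using S.coset_pos_rep[OF c(2)] unfolding Wo_def by blast
  have u: "c \<circ> x0 \<in> gen Refls" using gen_comp[OF c(2)] x0 S.WPsi_W unfolding Wo_def by blast
  have LL: "L' ((c \<circ> x0) y) = L y" for y
    using act_apply_W[OF c(2,3)] Wo_fixes_char[OF L x0] by simp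
  have coset_u: "\<beta> = (\<lambda>x. (c \<circ> x0) \<circ> x) ` Wo Phi cor L" using c(1) coset by simp
  have "wmin Phi cor P \<beta> = c \<circ> x0"
    using S.wmin_coset_pos[OF u pos] coset_u unfolding Wo_def by simp
  then show ?thesis by (rule that[OF u coset_u pos LL])
qed

lemma le_blk_coset_iff:
  assumes u: "u \<in> gen Refls" and wm: "wmin Phi cor P \<beta> = u"
    and x: "x \<in> Wo Phi cor L" and y: "y \<in> Wo Phi cor L"
  shows "le_blk Phi cor P L \<beta> (u \<circ> x) (u \<circ> y) \<longleftrightarrow> bruhat (SL Phi cor P L) (Wo Phi cor L) x y"
  using W_cancel_left[OF u] x y unfolding le_blk_def wm by blast

lemma bprod_coset:
  assumes u: "u \<in> gen Refls" and LL: "\<And>y. L' (u y) = L y"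
  shows "bprod ((\<lambda>x. v \<circ> x) ` Wo Phi cor L') ((\<lambda>x. u \<circ> x) ` Wo Phi cor L)
    = (\<lambda>x. (v \<circ> u) \<circ> x) ` Wo Phi cor L"
proof
  obtain u' where u': "u' \<in> gen Refls" "u' \<circ> u = id" "u \<circ> u' = id" using W_inv[OF u] by blast
  show "bprod ((\<lambda>x. v \<circ> x) ` Wo Phi cor L') ((\<lambda>x. u \<circ> x) ` Wo Phi cor L)
    \<subseteq> (\<lambda>x. (v \<circ> u) \<circ> x) ` Wo Phi cor L"
  proof
    fix z assume "z \<in> bprod ((\<lambda>x. v \<circ> x) ` Wo Phi cor L') ((\<lambda>x. u \<circ> x) ` Wo Phi cor L)"
    then obtain y x where y: "y \<in> Wo Phi cor L'" and x: "x \<in> Wo Phi cor L"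
      and z: "z = (v \<circ> y) \<circ> (u \<circ> x)" unfolding bprod_def by blast
    have "z = (v \<circ> u) \<circ> ((u' \<circ> y \<circ> u) \<circ> x)" using z u'(3) by (metis comp_assoc id_comp)
    moreover have "(u' \<circ> y \<circ> u) \<circ> x \<in> Wo Phi cor L"
      using gen_comp conj_Wo[where L'=L' and L=L, OF u u'(1) u'(3,2) LL y] x unfolding Wo_def by blast
    ultimately show "z \<in> (\<lambda>x. (v \<circ> u) \<circ> x) ` Wo Phi cor L" by blast
  qed
  have "(v \<circ> u) \<circ> x = (v \<circ> id) \<circ> (u \<circ> x)" for x by (simp add: comp_assoc)
  then show "(\<lambda>x. (v \<circ> u) \<circ> x) ` Wo Phi cor L
    \<subseteq> bprod ((\<lambda>x. v \<circ> x) ` Wo Phi cor L') ((\<lambda>x. u \<circ> x) ` Wo Phi cor L)"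
    unfolding bprod_def Wo_def using gen.gen_id by blast
qed

lemma comp_pos_rep:
  assumes u: "u \<in> gen Refls" and v: "v \<in> gen Refls" and LL: "\<And>y. L' (u y) = L y"
    and pos_u: "\<forall>a\<in>PhiL Phi cor L \<inter> P. act_root u a \<in> P"
    and pos_v: "\<forall>a\<in>PhiL Phi cor L' \<inter> P. act_root v a \<in> P"
  shows "\<forall>a\<in>PhiL Phi cor L \<inter> P. act_root (v \<circ> u) a \<in> P"
proof
  fix a assume a: "a \<in> PhiL Phi cor L \<inter> P"
  then have "act_root u a \<in> PhiL Phi cor L' \<inter> P"
    using act_root_PhiL[where L'=L' and L=L, OF u LL] pos_u by blast
  then show "act_root (v \<circ> u) a \<in> P"
    using pos_v act_root_comp[OF v u] a by (simp add: PhiL_def)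
qed

lemma conj_SL:
  assumes L'': "multiplicative L''"
    and w: "w \<in> gen Refls" and w': "w' \<circ> w = id" and LL: "\<And>y. L (w y) = L'' y"
    and pos: "\<forall>a\<in>PhiL Phi cor L'' \<inter> P. act_root w a \<in> P"
  shows "(\<lambda>t. w' \<circ> t \<circ> w) ` SL Phi cor P L = SL Phi cor P L''"
proof -
  interpret S: closed_subsystem Phi cor P f "PhiL Phi cor L''" by (rule closed_subsystem_PhiL[OF L''])
  have "act_root w ` (PhiL Phi cor L'' \<inter> P) = PhiL Phi cor L \<inter> P"
    using S.act_root_pos_image[OF w pos] act_root_PhiL_image[where L'=L and L=L'', OF w LL] by simp
  then have "act_root w ` simple_roots (PhiL Phi cor L'' \<inter> P) = simple_roots (PhiL Phi cor L \<inter> P)"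
    using act_root_simple_roots_image[OF w, of "PhiL Phi cor L'' \<inter> P"] S.Psi_root by auto
  then show ?thesis
    unfolding SL_def using conj_rrefl_image[OF w w', of "simple_roots (PhiL Phi cor L'' \<inter> P)"]
    by (simp add: simple_roots_def PhiL_def)
qed


lemma left_mult_wmin_iso:
  assumes L: "multiplicative L" and L': "multiplicative L'"
    and \<beta>: "\<beta> \<in> blocks Phi cor L' L" and \<gamma>: "\<gamma> \<in> blocks Phi cor L'' L'"
  shows "bij_betw (\<lambda>w. wmin Phi cor P \<gamma> \<circ> w) \<beta> (bprod \<gamma> \<beta>) \<and>
    (\<forall>u\<in>\<beta>. \<forall>w\<in>\<beta>. le_blk Phi cor P L \<beta> u w \<longleftrightarrow>
       le_blk Phi cor P L (bprod \<gamma> \<beta>) (wmin Phi cor P \<gamma> \<circ> u) (wmin Phi cor P \<gamma> \<circ> w))"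
proof -
  interpret S: closed_subsystem Phi cor P f "PhiL Phi cor L" by (rule closed_subsystem_PhiL[OF L])
  obtain u where u: "u \<in> gen Refls" "\<beta> = (\<lambda>x. u \<circ> x) ` Wo Phi cor L"
    "\<forall>a\<in>PhiL Phi cor L \<inter> P. act_root u a \<in> P" "\<And>y. L' (u y) = L y" "wmin Phi cor P \<beta> = u"
    using block_pos_rep[OF L \<beta>] by blast
  obtain v where v: "v \<in> gen Refls" "\<gamma> = (\<lambda>x. v \<circ> x) ` Wo Phi cor L'"
    "\<forall>a\<in>PhiL Phi cor L' \<inter> P. act_root v a \<in> P" "wmin Phi cor P \<gamma> = v"
    using block_pos_rep[OF L' \<gamma>] by blast
  have vu: "v \<circ> u \<in> gen Refls" using gen_comp[OF v(1) u(1)] .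
  have prod: "bprod \<gamma> \<beta> = (\<lambda>x. (v \<circ> u) \<circ> x) ` Wo Phi cor L"
    unfolding u(2) v(2) using bprod_coset[where L'=L' and L=L, OF u(1,4)] .
  have wm: "wmin Phi cor P (bprod \<gamma> \<beta>) = v \<circ> u"
    using S.wmin_coset_pos[OF vu comp_pos_rep[where L'=L' and L=L, OF u(1) v(1) u(4) u(3) v(3)]]
    unfolding prod Wo_def .
  have "inj_on (\<lambda>w. v \<circ> w) \<beta>" using W_cancel_left[OF v(1)] by (auto intro: inj_onI)
  moreover have "(\<lambda>w. v \<circ> w) ` \<beta> = bprod \<gamma> \<beta>"
    using prod u(2) by (simp add: image_image comp_assoc)
  moreover have "le_blk Phi cor P L \<beta> (u \<circ> x) (u \<circ> y) \<longleftrightarrow>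
      le_blk Phi cor P L (bprod \<gamma> \<beta>) (v \<circ> (u \<circ> x)) (v \<circ> (u \<circ> y))"
    if "x \<in> Wo Phi cor L" "y \<in> Wo Phi cor L" for x y
    using le_blk_coset_iff[OF u(1,5) that] le_blk_coset_iff[OF vu wm that]
    by (simp add: comp_assoc)
  ultimately show ?thesis unfolding bij_betw_def v(4) using u(2) by blast
qed

lemma conj_Wo_image:
  assumes d: "d \<in> gen Refls" and d': "d' \<in> gen Refls" "d' \<circ> d = id" "d \<circ> d' = id"
    and LL: "\<And>y. L (d y) = L'' y"
  shows "(\<lambda>x. d' \<circ> x \<circ> d) ` Wo Phi cor L = Wo Phi cor L''"
proof
  show "(\<lambda>x. d' \<circ> x \<circ> d) ` Wo Phi cor L \<subseteq> Wo Phi cor L''"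
    using conj_Wo[where L'=L and L=L'', OF d d'(1) d'(3,2) LL] by blast
  have LL': "L'' (d' y) = L y" for y using LL[of "d' y"] d'(3) by (metis comp_apply id_apply)
  have "y = d' \<circ> (d \<circ> y \<circ> d') \<circ> d" for y using d'(2) by (metis comp_assoc comp_id id_comp)
  then show "Wo Phi cor L'' \<subseteq> (\<lambda>x. d' \<circ> x \<circ> d) ` Wo Phi cor L"
    using conj_Wo[where L'=L'' and L=L, OF d'(1) d d'(2,3) LL'] by blast
qed

lemma bruhat_Wo_conj_iff:
  assumes L: "multiplicative L" and L'': "multiplicative L''"
    and d: "d \<in> gen Refls" "d' \<circ> d = id" "d \<circ> d' = id" and LL: "\<And>y. L (d y) = L'' y"
    and pos: "\<forall>a\<in>PhiL Phi cor L'' \<inter> P. act_root d a \<in> P"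
  shows "bruhat (SL Phi cor P L) (Wo Phi cor L) x y \<longleftrightarrow>
    bruhat (SL Phi cor P L'') (Wo Phi cor L'') (d' \<circ> x \<circ> d) (d' \<circ> y \<circ> d)"
  unfolding Wo_eq_gen_SL[OF L] Wo_eq_gen_SL[OF L'']
proof (rule conjugation.bruhat_conj_iff, unfold_locales)
  show "(\<lambda>t. d' \<circ> t \<circ> d) ` SL Phi cor P L = SL Phi cor P L''"
    using conj_SL[where L=L, OF L'' d(1,2) LL pos] .
qed (fact d)+

lemma right_mult_wmin_iso:
  assumes L: "multiplicative L" and L'': "multiplicative L''"
    and \<beta>: "\<beta> \<in> blocks Phi cor L' L" and \<delta>: "\<delta> \<in> blocks Phi cor L L''"
  shows "bij_betw (\<lambda>w. w \<circ> wmin Phi cor P \<delta>) \<beta> (bprod \<beta> \<delta>) \<and>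
    (\<forall>u\<in>\<beta>. \<forall>w\<in>\<beta>. le_blk Phi cor P L \<beta> u w \<longleftrightarrow>
       le_blk Phi cor P L'' (bprod \<beta> \<delta>) (u \<circ> wmin Phi cor P \<delta>) (w \<circ> wmin Phi cor P \<delta>))"
proof -
  interpret S: closed_subsystem Phi cor P f "PhiL Phi cor L''" by (rule closed_subsystem_PhiL[OF L''])
  obtain u where u: "u \<in> gen Refls" "\<beta> = (\<lambda>x. u \<circ> x) ` Wo Phi cor L"
    "\<forall>a\<in>PhiL Phi cor L \<inter> P. act_root u a \<in> P" "wmin Phi cor P \<beta> = u"
    using block_pos_rep[OF L \<beta>] by blast
  obtain d where d: "d \<in> gen Refls" "\<delta> = (\<lambda>x. d \<circ> x) ` Wo Phi cor L''"
    "\<forall>a\<in>PhiL Phi cor L'' \<inter> P. act_root d a \<in> P" "\<And>y. L (d y) = L'' y" "wmin Phi cor P \<delta> = d"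
    using block_pos_rep[OF L'' \<delta>] by blast
  obtain d' where d': "d' \<in> gen Refls" "d' \<circ> d = id" "d \<circ> d' = id" using W_inv[OF d(1)] by blast
  have ud: "u \<circ> d \<in> gen Refls" using gen_comp[OF u(1) d(1)] .
  have prod: "bprod \<beta> \<delta> = (\<lambda>x. (u \<circ> d) \<circ> x) ` Wo Phi cor L''"
    unfolding u(2) d(2) using bprod_coset[where L'=L and L=L'', OF d(1,4)] .
  have wm: "wmin Phi cor P (bprod \<beta> \<delta>) = u \<circ> d"
    using S.wmin_coset_pos[OF ud comp_pos_rep[where L'=L and L=L'', OF d(1) u(1) d(4) d(3) u(3)]]
    unfolding prod Wo_def .
  have conj_image: "(\<lambda>x. d' \<circ> x \<circ> d) ` Wo Phi cor L = Wo Phi cor L''"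
    using conj_Wo_image[where L=L and L''=L'', OF d(1) d' d(4)] .
  have right_mult: "(u \<circ> x) \<circ> d = (u \<circ> d) \<circ> (d' \<circ> x \<circ> d)" for x
    using d'(3) by (metis comp_assoc id_comp)
  have "inj_on (\<lambda>w. w \<circ> d) \<beta>" using W_cancel_right[OF d(1)] by (auto intro: inj_onI)
  moreover have "(\<lambda>w. w \<circ> d) ` \<beta> = (\<lambda>x. (u \<circ> d) \<circ> x) ` Wo Phi cor L''"
    unfolding u(2) conj_image[symmetric] image_image right_mult ..
  moreover have "le_blk Phi cor P L \<beta> (u \<circ> x) (u \<circ> y) \<longleftrightarrow>
      le_blk Phi cor P L'' (bprod \<beta> \<delta>) ((u \<circ> x) \<circ> d) ((u \<circ> y) \<circ> d)"
    if x: "x \<in> Wo Phi cor L" and y: "y \<in> Wo Phi cor L" for x y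
    using le_blk_coset_iff[OF u(1,4) x y] bruhat_Wo_conj_iff[OF L L'' d(1) d'(2,3) d(4) d(3)]
      le_blk_coset_iff[OF ud wm, where x = "d' \<circ> x \<circ> d" and y = "d' \<circ> y \<circ> d"] conj_image x y
    unfolding right_mult by blast
  ultimately show ?thesis unfolding bij_betw_def d(5) using u(2) prod by auto
qed

lemma le_blk_imp_bruhat:
  assumes L: "multiplicative L" and \<beta>: "\<beta> \<in> blocks Phi cor L' L"
    and le: "le_blk Phi cor P L \<beta> w' w"
  shows "bruhat (Wsimple cor P) (Wgrp Phi cor) w' w"
proof -
  interpret S: closed_subsystem Phi cor P f "PhiL Phi cor L" by (rule closed_subsystem_PhiL[OF L])
  obtain u where u: "u \<in> gen Refls" "\<forall>a\<in>PhiL Phi cor L \<inter> P. act_root u a \<in> P"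
    "wmin Phi cor P \<beta> = u"
    using block_pos_rep[OF L \<beta>] by blast
  obtain x' x where "w' = u \<circ> x'" "w = u \<circ> x" "bruhat (SL Phi cor P L) (Wo Phi cor L) x' x"
    using le unfolding le_blk_def u(3) by blast
  then show ?thesis
    using S.bruhat_left_mult_pos[OF u(1,2)] by (simp add: Wo_def SL_def S.Delta_def)
qed

end


theorem lemma4p8:
  fixes Phi :: "('n::finite \<Rightarrow> int) set" and cor :: "('n \<Rightarrow> int) \<Rightarrow> ('n \<Rightarrow> int)"
    and P :: "('n \<Rightarrow> int) set" and p :: nat
    and L L' L'' :: "('n \<Rightarrow> int) \<Rightarrow> complex"
    and \<beta> :: "(('n \<Rightarrow> int) \<Rightarrow> ('n \<Rightarrow> int)) set"
  assumes "root_datum Phi cor" and "reduced_rd Phi" and "positive_system Phi P"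
    and "prime p"
    and "tame_char p L" and "tame_char p L'" and "tame_char p L''"
    and "\<exists>w\<in>Wgrp Phi cor. act w L = L'" and "\<exists>w\<in>Wgrp Phi cor. act w L = L''"
    and "\<beta> \<in> blocks Phi cor L' L"
  shows "(\<forall>\<gamma>\<in>blocks Phi cor L'' L'.
            bij_betw (\<lambda>w. wmin Phi cor P \<gamma> \<circ> w) \<beta> (bprod \<gamma> \<beta>) \<and>
            (\<forall>u\<in>\<beta>. \<forall>w\<in>\<beta>. le_blk Phi cor P L \<beta> u w \<longleftrightarrow>
               le_blk Phi cor P L (bprod \<gamma> \<beta>) (wmin Phi cor P \<gamma> \<circ> u) (wmin Phi cor P \<gamma> \<circ> w)))
       \<and> (\<forall>\<delta>\<in>blocks Phi cor L L''.
            bij_betw (\<lambda>w. w \<circ> wmin Phi cor P \<delta>) \<beta> (bprod \<beta> \<delta>) \<and>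
            (\<forall>u\<in>\<beta>. \<forall>w\<in>\<beta>. le_blk Phi cor P L \<beta> u w \<longleftrightarrow>
               le_blk Phi cor P L'' (bprod \<beta> \<delta>) (u \<circ> wmin Phi cor P \<delta>) (w \<circ> wmin Phi cor P \<delta>)))
       \<and> (\<forall>w\<in>\<beta>. \<forall>w'\<in>\<beta>. le_blk Phi cor P L \<beta> w' w \<longrightarrow>
            bruhat (Wsimple cor P) (Wgrp Phi cor) w' w)"
proof -
  obtain f :: "'n \<Rightarrow> real" where f: "\<forall>a\<in>Phi. (\<Sum>i\<in>UNIV. f i * of_int (a i)) \<noteq> 0"
      "P = {a\<in>Phi. (\<Sum>i\<in>UNIV. f i * of_int (a i)) > 0}"
    using assms(3) unfolding positive_system_def by blast
  interpret based_root_datum Phi cor P f by unfold_locales (use assms(1,2) f in auto)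
  have L: "multiplicative L" "multiplicative L'" "multiplicative L''"
    using assms(5-7) by (auto intro: tame_char_multiplicative)
  show ?thesis
    using left_mult_wmin_iso[OF L(1,2) assms(10)] right_mult_wmin_iso[OF L(1,3) assms(10)]
      le_blk_imp_bruhat[OF L(1) assms(10)] by blast
qed

end
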